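(* Consider an arbitrary sequence of instances $\{\mathcal{I}_N\}$ of the binary voting game and an arbitrary sequence of regular strategy profiles $\{\Sigma_N\}_{N\ge1}$, and let $f^N$ be the excess expected vote share of $\Sigma_N$. (i) If $\liminf_{N\to\infty}\sqrt N f^N=+\infty$, then there is a sequence $\varepsilon_N\to0$ such that for every $N$, $\Sigma_N$ is an $\varepsilon_N$-strong Bayes Nash Equilibrium. (ii) If $\liminf_{N\to\infty}\sqrt N f^N<0$ (including $-\infty$), then there are a constant $\varepsilon>0$ and infinitely many $N$ such that $\Sigma_N$ is not an $\varepsilon$-strong Bayes Nash Equilibrium. (iii) If $0\le\liminf_{N\to\infty}\sqrt N f^N<+\infty$ and there is a constant $\psi>0$ such that $\mathrm{Var}(\sum_{n=1}^N X_n^N\mid W=w)\ge\psi N$ for every $N$ and every $w\in\{L,H\}$, then there are a constant $\varepsilon>0$ and infinitely many $N$ such that $\Sigma_N$ is not an $\varepsilon$-strong Bayes Nash Equilibrium.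
   Context: Binary voting game. An instance has $N$ agents each voting for $\mathbf{A}$ or $\mathbf{R}$. Unobserved world state $W\in\{L,H\}$ with common prior $P_L,P_H>0$. Conditional on $W$, each agent independently receives a signal $S_n\in\{l,h\}$ with $P_{sw}=\Pr[S_n=s\mid W=w]$, $P_{hH}>P_{hL}$, $P_{lH}<P_{lL}$. With threshold $\mu\in(0,1)$, $\mathbf{A}$ wins iff at least $\mu N$ agents vote $\mathbf{A}$, else $\mathbf{R}$. Agent $n$ has utility $v_n:\{L,H\}\times\{\mathbf{A},\mathbf{R}\}\to\{0,\dots,B\}$ ($B$ fixed) with $v_n(H,\mathbf{A})>v_n(L,\mathbf{A})$, $v_n(H,\mathbf{R})<v_n(L,\mathbf{R})$. Every agent is friendly ($v_n(H,\mathbf{A})>v_n(L,\mathbf{A})>v_n(L,\mathbf{R})>v_n(H,\mathbf{R})$), unfriendly ($v_n(L,\mathbf{R})>v_n(H,\mathbf{R})>v_n(H,\mathbf{A})>v_n(L,\mathbf{A})$) or contingent ($v_n(H,\mathbf{A})>v_n(H,\mathbf{R})$, $v_n(L,\mathbf{R})>v_n(L,\mathbf{A})$); counts $\lfloor\alpha_F N\rfloor$, $\lfloor\alpha_U N\rfloor$, rest, for fixed $\alpha_F,\alpha_U,\alpha_C\ge0$ summing to 1 with $\alpha_F<\mu$, $\alpha_U<1-\mu$ (so the informed majority decision is $\mathbf{A}$ in $H$, $\mathbf{R}$ in $L$). A sequence of instances $\{\mathcal{I}_N\}$: $\mathcal{I}_N$ has $N$ agents; all share $\mu$, prior, signal distribution,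 $\alpha$'s; utilities arbitrary. Strategy $\sigma=(\beta_l,\beta_h)$, $\beta_s$ = probability of voting $\mathbf{A}$ on signal $s$. Regular profile: friendly agents always vote $\mathbf{A}$, unfriendly agents always vote $\mathbf{R}$. $\lambda^{\mathbf{X}}_w(\Sigma)$: ex-ante probability that $\mathbf{X}$ wins in state $w$. Expected utility $u_n(\Sigma)=\sum_w P_w(\lambda^{\mathbf{A}}_w(\Sigma)v_n(w,\mathbf{A})+\lambda^{\mathbf{R}}_w(\Sigma)v_n(w,\mathbf{R}))$. $\Sigma$ is an $\varepsilon$-strong Bayes Nash Equilibrium if there is no set $D$ of agents and profile $\Sigma'$ with $\sigma'_n=\sigma_n$ for $n\notin D$, $u_n(\Sigma')\ge u_n(\Sigma)$ for all $n\in D$ and $u_n(\Sigma')>u_n(\Sigma)+\varepsilon$ for some $n\in D$. For $\Sigma_N$, $X_n^N=1$ if agent $n$ votes $\mathbf{A}$ and $0$ otherwise; $f^N_H=\frac1N\sum_n E[X_n^N\mid W=H]-\mu$, $f^N_L=\frac1N\sum_n E[1-X_n^N\mid W=L]-(1-\mu)$, $f^N=\min(f^N_H,f^N_L)$. *)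

theory Defs
  imports "HOL-Analysis.Analysis"
begin

datatype wstate = Lo | Hi
datatype outcome = Acc | Rej

text \<open>A strategy is a pair (beta_l, beta_h): probabilities of voting A on signal l, resp. h.\<close>
type_synonym strategy = "real \<times> real"

definition valid_strategy :: "strategy \<Rightarrow> bool" where
  "valid_strategy \<sigma> \<longleftrightarrow> 0 \<le> fst \<sigma> \<and> fst \<sigma> \<le> 1 \<and> 0 \<le> snd \<sigma> \<and> snd \<sigma> \<le> 1"

text \<open>Ph w = Pr[S_n = h | W = w]; hence Pr[S_n = l | W = w] = 1 - Ph w.
  Probability that an agent playing sigma votes A in state w.\<close>
definition voteA_prob :: "(wstate \<Rightarrow> real) \<Rightarrow> wstate \<Rightarrow> strategy \<Rightarrow> real" where
  "voteA_prob Ph w \<sigma> = (1 - Ph w) * fst \<sigma> + Ph w * snd \<sigma>"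

definition set_weight :: "(nat \<Rightarrow> real) \<Rightarrow> nat \<Rightarrow> nat set \<Rightarrow> real" where
  "set_weight p N S = (\<Prod>n\<in>S. p n) * (\<Prod>n\<in>{..<N} - S. 1 - p n)"

definition winA :: "real \<Rightarrow> (wstate \<Rightarrow> real) \<Rightarrow> nat \<Rightarrow> (nat \<Rightarrow> strategy) \<Rightarrow> wstate \<Rightarrow> real" where
  "winA \<mu> Ph N \<Sigma> w =
     (\<Sum>S | S \<subseteq> {..<N} \<and> real (card S) \<ge> \<mu> * real N. set_weight (\<lambda>n. voteA_prob Ph w (\<Sigma> n)) N S)"

definition winR :: "real \<Rightarrow> (wstate \<Rightarrow> real) \<Rightarrow> nat \<Rightarrow> (nat \<Rightarrow> strategy) \<Rightarrow> wstate \<Rightarrow> real" where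
  "winR \<mu> Ph N \<Sigma> w =
     (\<Sum>S | S \<subseteq> {..<N} \<and> real (card S) < \<mu> * real N. set_weight (\<lambda>n. voteA_prob Ph w (\<Sigma> n)) N S)"

definition exp_util :: "(wstate \<Rightarrow> real) \<Rightarrow> (wstate \<Rightarrow> real) \<Rightarrow> real \<Rightarrow> nat \<Rightarrow> (nat \<Rightarrow> strategy)
    \<Rightarrow> (wstate \<Rightarrow> outcome \<Rightarrow> nat) \<Rightarrow> real" where
  "exp_util prior Ph \<mu> N \<Sigma> u =
     (\<Sum>w\<in>{Lo, Hi}. prior w * (winA \<mu> Ph N \<Sigma> w * real (u w Acc) + winR \<mu> Ph N \<Sigma> w * real (u w Rej)))"

definition strong_BNE :: "(wstate \<Rightarrow> real) \<Rightarrow> (wstate \<Rightarrow> real) \<Rightarrow> real \<Rightarrow> nat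
    \<Rightarrow> (nat \<Rightarrow> wstate \<Rightarrow> outcome \<Rightarrow> nat) \<Rightarrow> (nat \<Rightarrow> strategy) \<Rightarrow> real \<Rightarrow> bool" where
  "strong_BNE prior Ph \<mu> N v \<Sigma> \<epsilon> \<longleftrightarrow>
     \<not> (\<exists>D \<Sigma>'. D \<subseteq> {..<N} \<and> (\<forall>n<N. valid_strategy (\<Sigma>' n)) \<and>
            (\<forall>n<N. n \<notin> D \<longrightarrow> \<Sigma>' n = \<Sigma> n) \<and>
            (\<forall>n\<in>D. exp_util prior Ph \<mu> N \<Sigma>' (v n) \<ge> exp_util prior Ph \<mu> N \<Sigma> (v n)) \<and>
            (\<exists>n\<in>D. exp_util prior Ph \<mu> N \<Sigma>' (v n) > exp_util prior Ph \<mu> N \<Sigma> (v n) + \<epsilon>))"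

definition friendly :: "(wstate \<Rightarrow> outcome \<Rightarrow> nat) \<Rightarrow> bool" where
  "friendly u \<longleftrightarrow> u Hi Acc > u Lo Acc \<and> u Lo Acc > u Lo Rej \<and> u Lo Rej > u Hi Rej"

definition unfriendly :: "(wstate \<Rightarrow> outcome \<Rightarrow> nat) \<Rightarrow> bool" where
  "unfriendly u \<longleftrightarrow> u Lo Rej > u Hi Rej \<and> u Hi Rej > u Hi Acc \<and> u Hi Acc > u Lo Acc"

definition contingent :: "(wstate \<Rightarrow> outcome \<Rightarrow> nat) \<Rightarrow> bool" where
  "contingent u \<longleftrightarrow> u Hi Acc > u Hi Rej \<and> u Lo Rej > u Lo Acc"

definition regular :: "nat \<Rightarrow> (nat \<Rightarrow> wstate \<Rightarrow> outcome \<Rightarrow> nat) \<Rightarrow> (nat \<Rightarrow> strategy) \<Rightarrow> bool" where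
  "regular N v \<Sigma> \<longleftrightarrow> (\<forall>n<N. valid_strategy (\<Sigma> n) \<and>
      (friendly (v n) \<longrightarrow> \<Sigma> n = (1, 1)) \<and> (unfriendly (v n) \<longrightarrow> \<Sigma> n = (0, 0)))"

definition excess :: "(wstate \<Rightarrow> real) \<Rightarrow> real \<Rightarrow> nat \<Rightarrow> (nat \<Rightarrow> strategy) \<Rightarrow> real" where
  "excess Ph \<mu> N \<Sigma> =
     min ((\<Sum>n<N. voteA_prob Ph Hi (\<Sigma> n)) / real N - \<mu>)
         ((\<Sum>n<N. 1 - voteA_prob Ph Lo (\<Sigma> n)) / real N - (1 - \<mu>))"

definition var_votes :: "(wstate \<Rightarrow> real) \<Rightarrow> nat \<Rightarrow> (nat \<Rightarrow> strategy) \<Rightarrow> wstate \<Rightarrow> real" where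
  "var_votes Ph N \<Sigma> w =
     (let p = (\<lambda>n. voteA_prob Ph w (\<Sigma> n));
          m = (\<Sum>S\<in>Pow {..<N}. set_weight p N S * real (card S))
      in (\<Sum>S\<in>Pow {..<N}. set_weight p N S * (real (card S) - m)^2))"

end

theory Submission
  imports Defs
begin

text \<open>Under a regular profile the number of A-votes in state \<open>w\<close> is a sum of independent Bernoulli
  variables, whose mean exceeds (in H) or falls short of (in L) the threshold \<open>\<mu> N\<close> by at least
  \<open>N f\<^sup>N\<close>, and whose variance is at most \<open>N / 4\<close>.

  (i) By Cantelli's inequality the probability that the outcome differs from the informed majority
  decision is \<open>O(1 / (\<surd>N f\<^sup>N)\<^sup>2)\<close>. Changing the winning probabilities only moves probability
  mass onto or off this error event, and the incentives of friendly, unfriendly and contingent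
  agents prevent a coalition from profiting from more than a bounded multiple of it.

  (ii), (iii) If \<open>\<surd>N f\<^sup>N\<close> stays below a negative constant, Cantelli's inequality, and if it stays
  bounded while the variance grows linearly, an anti-concentration bound (Paley--Zygmund on blocks
  of bounded variance, combined by independence), show that infinitely often the error
  probability is bounded away from zero. Then all contingent agents gain a fixed amount by
  jointly switching to a strategy that votes A with probability above \<open>(\<mu> - \<alpha>\<^sub>F) / \<alpha>\<^sub>C\<close> in
  state H and below it in state L: the resulting profile has positive excess, so by (i) it reaches
  the informed majority decision with probability tending to one.\<close>

section \<open>Random sets with independent memberships\<close>

text \<open>A random subset of \<open>I\<close> that contains each \<open>i\<close> independently with probability \<open>p i\<close>:
  \<open>bern_weight p I S\<close> is the probability that it equals \<open>S\<close>. The set of agents voting A in a given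
  state is such a random set, so the number of A-votes is its cardinality.\<close>

definition bern_weight :: "('a \<Rightarrow> real) \<Rightarrow> 'a set \<Rightarrow> 'a set \<Rightarrow> real" where
  "bern_weight p I S = (\<Prod>i\<in>S. p i) * (\<Prod>i\<in>I - S. 1 - p i)"

definition bern_expect :: "('a \<Rightarrow> real) \<Rightarrow> 'a set \<Rightarrow> ('a set \<Rightarrow> real) \<Rightarrow> real" where
  "bern_expect p I g = (\<Sum>S\<in>Pow I. bern_weight p I S * g S)"

definition bern_mean :: "('a \<Rightarrow> real) \<Rightarrow> 'a set \<Rightarrow> real" where
  "bern_mean p I = (\<Sum>i\<in>I. p i)"

definition bern_var :: "('a \<Rightarrow> real) \<Rightarrow> 'a set \<Rightarrow> real" where
  "bern_var p I = (\<Sum>i\<in>I. p i * (1 - p i))"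

lemma bern_expect_empty [simp]: "bern_expect p {} g = g {}"
  by (simp add: bern_expect_def bern_weight_def)

lemma bern_expect_insert:
  assumes "finite I" "j \<notin> I"
  shows "bern_expect p (insert j I) g = bern_expect p I (\<lambda>S. p j * g (insert j S) + (1 - p j) * g S)"
proof -
  have weight_out: "bern_weight p (insert j I) S = (1 - p j) * bern_weight p I S" if "S \<subseteq> I" for S
  proof -
    have "insert j I - S = insert j (I - S)" using that assms(2) by auto
    then show ?thesis using assms by (simp add: bern_weight_def)
  qed
  have weight_in: "bern_weight p (insert j I) (insert j S) = p j * bern_weight p I S" if "S \<subseteq> I" for S
  proof -
    have "insert j I - insert j S = I - S" using that assms(2) by auto
    moreover have "finite S" "j \<notin> S" using assms that finite_subset by auto
    ultimately show ?thesis by (simp add: bern_weight_def)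
  qed
  have "inj_on (insert j) (Pow I)" "Pow I \<inter> insert j ` Pow I = {}"
    using assms(2) by (auto simp: inj_on_def)
  then have "bern_expect p (insert j I) g = (\<Sum>S\<in>Pow I. bern_weight p (insert j I) S * g S)
      + (\<Sum>S\<in>Pow I. bern_weight p (insert j I) (insert j S) * g (insert j S))"
    unfolding bern_expect_def Pow_insert using assms(1) by (simp add: sum.union_disjoint sum.reindex)
  also have "\<dots> = (\<Sum>S\<in>Pow I. (1 - p j) * bern_weight p I S * g S)
      + (\<Sum>S\<in>Pow I. p j * bern_weight p I S * g (insert j S))"
    by (intro arg_cong2[where f = "(+)"] sum.cong) (auto simp: weight_out weight_in)
  finally show ?thesis
    by (simp add: bern_expect_def sum.distrib[symmetric] algebra_simps)
qed

lemma bern_expect_add: "bern_expect p I (\<lambda>S. f S + g S) = bern_expect p I f + bern_expect p I g"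
  by (simp add: bern_expect_def algebra_simps sum.distrib)

lemma bern_expect_diff: "bern_expect p I (\<lambda>S. f S - g S) = bern_expect p I f - bern_expect p I g"
  by (simp add: bern_expect_def algebra_simps sum_subtractf)

lemma bern_expect_cmult: "bern_expect p I (\<lambda>S. c * f S) = c * bern_expect p I f"
  by (simp add: bern_expect_def algebra_simps sum_distrib_left)

lemma bern_expect_cong: "(\<And>S. S \<subseteq> I \<Longrightarrow> f S = g S) \<Longrightarrow> bern_expect p I f = bern_expect p I g"
  by (auto simp: bern_expect_def intro!: sum.cong)

lemma bern_expect_const: "finite I \<Longrightarrow> bern_expect p I (\<lambda>_. c) = c"
  by (induction I rule: finite_induct) (simp_all add: bern_expect_insert algebra_simps)

lemma bern_weight_nonneg: "p ` I \<subseteq> {0..1} \<Longrightarrow> S \<subseteq> I \<Longrightarrow> 0 \<le> bern_weight p I S"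
  unfolding bern_weight_def by (intro mult_nonneg_nonneg prod_nonneg) (auto simp: image_subset_iff)

lemma bern_expect_mono:
  "p ` I \<subseteq> {0..1} \<Longrightarrow> (\<And>S. S \<subseteq> I \<Longrightarrow> f S \<le> g S) \<Longrightarrow> bern_expect p I f \<le> bern_expect p I g"
  unfolding bern_expect_def by (intro sum_mono mult_left_mono) (auto simp: bern_weight_nonneg)

lemma bern_expect_indicator_mono:
  "p ` I \<subseteq> {0..1} \<Longrightarrow> (\<And>S. S \<subseteq> I \<Longrightarrow> P S \<Longrightarrow> Q S) \<Longrightarrow>
    bern_expect p I (\<lambda>S. of_bool (P S)) \<le> bern_expect p I (\<lambda>S. of_bool (Q S))"
  by (rule bern_expect_mono) auto

lemma bern_expect_indicator_bounds:
  assumes "finite I" "p ` I \<subseteq> {0..1}"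
  shows "0 \<le> bern_expect p I (\<lambda>S. of_bool (P S))" "bern_expect p I (\<lambda>S. of_bool (P S)) \<le> 1"
  using bern_expect_mono[OF assms(2), of "\<lambda>_. 0" "\<lambda>S. of_bool (P S)"]
    bern_expect_mono[OF assms(2), of "\<lambda>S. of_bool (P S)" "\<lambda>_. 1"]
  by (simp_all add: bern_expect_const[OF assms(1)])

lemma bern_expect_insert_card:
  assumes "finite I" "j \<notin> I"
  shows "bern_expect p (insert j I) (\<lambda>S. h (real (card S))) =
         bern_expect p I (\<lambda>S. p j * h (real (card S) + 1) + (1 - p j) * h (real (card S)))"
proof -
  have "card (insert j S) = card S + 1" if "S \<subseteq> I" for S
    using that assms finite_subset by (subst card_insert_disjoint) auto
  then show ?thesis
    unfolding bern_expect_insert[OF assms] by (intro bern_expect_cong) (simp add: add.commute)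
qed

lemma bern_expect_card: "finite I \<Longrightarrow> bern_expect p I (\<lambda>S. real (card S)) = bern_mean p I"
proof (induction I rule: finite_induct)
  case (insert j I)
  then show ?case
    using bern_expect_insert_card[OF insert(1,2), of p "\<lambda>x. x"]
    by (simp add: algebra_simps bern_expect_add bern_expect_const bern_mean_def)
qed (simp add: bern_mean_def)

lemma bern_expect_centred: "finite I \<Longrightarrow> bern_expect p I (\<lambda>S. real (card S) - bern_mean p I) = 0"
  by (simp add: bern_expect_diff bern_expect_card bern_expect_const)

lemma bern_expect_card_var:
  "finite I \<Longrightarrow> bern_expect p I (\<lambda>S. (real (card S) - bern_mean p I)^2) = bern_var p I"
proof (induction I rule: finite_induct)
  case (insert j I)
  define m where "m = bern_mean p I"
  have "bern_expect p (insert j I) (\<lambda>S. (real (card S) - bern_mean p (insert j I))^2)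
      = bern_expect p I (\<lambda>S. p j * (real (card S) + 1 - (m + p j))^2
                           + (1 - p j) * (real (card S) - (m + p j))^2)"
    using insert bern_expect_insert_card[OF insert(1,2), of p "\<lambda>x. (x - (m + p j))^2"]
    by (simp add: m_def bern_mean_def algebra_simps)
  also have "\<dots> = bern_expect p I (\<lambda>S. (real (card S) - m)^2 + p j * (1 - p j))"
    by (intro bern_expect_cong) (simp add: power2_eq_square algebra_simps)
  finally show ?case
    using insert by (simp add: bern_expect_add bern_expect_const m_def bern_var_def)
qed (simp add: bern_mean_def bern_var_def)

lemma bern_expect_card_fourth_moment:
  "finite I \<Longrightarrow> p ` I \<subseteq> {0..1} \<Longrightarrow>
    bern_expect p I (\<lambda>S. (real (card S) - bern_mean p I)^4) \<le> 3 * (bern_var p I)^2 + bern_var p I"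
proof (induction I rule: finite_induct)
  case (insert j I)
  define m where "m = bern_mean p I"
  define v where "v = bern_var p I"
  define q where "q = 1 - p j"
  have pj: "0 \<le> p j" "0 \<le> q" using insert(4) by (auto simp: q_def)
  have "bern_expect p (insert j I) (\<lambda>S. (real (card S) - bern_mean p (insert j I))^4)
      = bern_expect p (insert j I) (\<lambda>S. (real (card S) - (m + p j))^4)"
    using insert by (simp add: m_def bern_mean_def algebra_simps)
  also have "\<dots> = bern_expect p I (\<lambda>S. (real (card S) - m)^4 + 6 * (p j * q) * (real (card S) - m)^2
          + (4 * p j * q * (q - p j)) * (real (card S) - m) + p j * q * (p j ^ 3 + q ^ 3))"
    unfolding bern_expect_insert_card[OF insert(1,2), of p "\<lambda>x. (x - (m + p j))^4"]
    by (intro bern_expect_cong)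
      (simp only: q_def power4_eq_xxxx power3_eq_cube power2_eq_square, algebra)
  also have "\<dots> = bern_expect p I (\<lambda>S. (real (card S) - m)^4) + 6 * (p j * q) * v
      + p j * q * (p j ^ 3 + q ^ 3)"
    using insert(1) by (simp add: bern_expect_add bern_expect_cmult bern_expect_const
        bern_expect_card_var bern_expect_centred m_def v_def)
  also have "\<dots> \<le> (3 * v^2 + v) + 6 * (p j * q) * v + p j * q"
  proof -
    have "p j ^ 3 + q ^ 3 \<le> p j + q"
      using power_decreasing[of 1 3 "p j"] power_decreasing[of 1 3 q] pj by (simp add: q_def)
    then have "p j * q * (p j ^ 3 + q ^ 3) \<le> p j * q"
      using pj by (simp add: q_def mult_left_le)
    then show ?thesis using insert by (simp add: m_def v_def image_subset_iff)
  qed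
  also have "\<dots> \<le> 3 * (v + p j * q)^2 + (v + p j * q)"
    using zero_le_power2[of "p j * q"] by (simp add: power2_eq_square algebra_simps)
  finally show ?case using insert by (simp add: v_def q_def bern_var_def add.commute)
qed (simp add: bern_mean_def bern_var_def)

lemma bern_expect_indep:
  assumes "finite J" "finite K" "J \<inter> K = {}"
  shows "bern_expect p (J \<union> K) (\<lambda>S. f (S \<inter> J) * g (S \<inter> K)) = bern_expect p J f * bern_expect p K g"
  using assms(2,3)
proof (induction K arbitrary: g rule: finite_induct)
  case empty
  have "bern_expect p J (\<lambda>S. f (S \<inter> J) * g {}) = bern_expect p J (\<lambda>S. g {} * f S)"
    by (intro bern_expect_cong) (auto simp: Int_absorb2)
  then show ?case using assms(1) by (simp add: bern_expect_cmult)
next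
  case (insert k K)
  have k: "k \<notin> J \<union> K" and JK: "J \<inter> K = {}" using insert by auto
  define g' where "g' T = p k * g (insert k T) + (1 - p k) * g T" for T
  have "bern_expect p (J \<union> insert k K) (\<lambda>S. f (S \<inter> J) * g (S \<inter> insert k K))
      = bern_expect p (J \<union> K) (\<lambda>S. p k * (f (insert k S \<inter> J) * g (insert k S \<inter> insert k K))
          + (1 - p k) * (f (S \<inter> J) * g (S \<inter> insert k K)))"
    using assms(1) insert(1) k by (simp add: bern_expect_insert)
  also have "\<dots> = bern_expect p (J \<union> K) (\<lambda>S. f (S \<inter> J) * g' (S \<inter> K))"
  proof (intro bern_expect_cong)
    fix S assume "S \<subseteq> J \<union> K"
    then have "insert k S \<inter> J = S \<inter> J" "insert k S \<inter> insert k K = insert k (S \<inter> K)"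
      "S \<inter> insert k K = S \<inter> K" using k by auto
    then show "p k * (f (insert k S \<inter> J) * g (insert k S \<inter> insert k K))
        + (1 - p k) * (f (S \<inter> J) * g (S \<inter> insert k K)) = f (S \<inter> J) * g' (S \<inter> K)"
      by (simp add: g'_def algebra_simps)
  qed
  also have "\<dots> = bern_expect p J f * bern_expect p (insert k K) g"
    using insert.IH[OF JK] insert(1,2) by (simp add: bern_expect_insert g'_def[abs_def])
  finally show ?case .
qed

lemma bern_expect_mono_prob:
  assumes "finite I" "\<And>i. i \<in> I \<Longrightarrow> 0 \<le> p i \<and> p i \<le> p' i \<and> p' i \<le> 1"
    and g_mono: "\<And>S T. S \<subseteq> T \<Longrightarrow> T \<subseteq> I \<Longrightarrow> g S \<le> g T"
  shows "bern_expect p I g \<le> bern_expect p' I g"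
  using assms
proof (induction I arbitrary: g rule: finite_induct)
  case (insert j I)
  define g' where "g' S = p' j * g (insert j S) + (1 - p' j) * g S" for S
  have pj: "0 \<le> p j" "p j \<le> p' j" "p' j \<le> 1" using insert(4) by auto
  have "p ` I \<subseteq> {0..1}" using insert(4) by force
  then have "bern_expect p (insert j I) g \<le> bern_expect p I g'"
    unfolding bern_expect_insert[OF insert(1,2)]
  proof (intro bern_expect_mono)
    fix S assume "S \<subseteq> I"
    then have "g S \<le> g (insert j S)" using insert(5)[of S "insert j S"] by blast
    then have "0 \<le> (p' j - p j) * (g (insert j S) - g S)" using pj by simp
    then show "p j * g (insert j S) + (1 - p j) * g S \<le> g' S" by (simp add: g'_def algebra_simps)
  qed
  also have "\<dots> \<le> bern_expect p' I g'"
  proof (rule insert.IH)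
    fix S T assume "S \<subseteq> T" "T \<subseteq> I"
    then have "g S \<le> g T" "g (insert j S) \<le> g (insert j T)"
      using insert(5)[of S T] insert(5)[of "insert j S" "insert j T"] by auto
    then show "g' S \<le> g' T"
      unfolding g'_def using pj by (intro add_mono mult_left_mono) auto
  qed (use insert(4) in auto)
  also have "\<dots> = bern_expect p' (insert j I) g"
    using insert(1,2) by (simp add: bern_expect_insert g'_def[abs_def])
  finally show ?case .
qed simp

lemma bern_var_nonneg: "p ` I \<subseteq> {0..1} \<Longrightarrow> 0 \<le> bern_var p I"
  unfolding bern_var_def by (intro sum_nonneg) auto

lemma mult_one_minus_le_quarter: "(x::real) * (1 - x) \<le> 1/4"
  using zero_le_power2[of "x - 1/2"] by (simp add: power2_eq_square algebra_simps)

lemma bern_var_le: "bern_var p I \<le> real (card I) / 4"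
proof -
  have "bern_var p I \<le> (\<Sum>i\<in>I. 1/4)"
    unfolding bern_var_def by (intro sum_mono mult_one_minus_le_quarter)
  then show ?thesis by simp
qed

lemma bern_var_diff: "finite I \<Longrightarrow> J \<subseteq> I \<Longrightarrow> bern_var p (I - J) = bern_var p I - bern_var p J"
  unfolding bern_var_def by (simp add: sum_diff)

lemma bern_mean_diff: "finite I \<Longrightarrow> J \<subseteq> I \<Longrightarrow> bern_mean p (I - J) = bern_mean p I - bern_mean p J"
  unfolding bern_mean_def by (simp add: sum_diff)

section \<open>Concentration and anti-concentration\<close>

lemma bern_expect_square_nonneg:
  "p ` I \<subseteq> {0..1} \<Longrightarrow> 0 \<le> bern_expect p I (\<lambda>S. (Z S)^2)"
  using bern_expect_mono[of p I "\<lambda>_. 0" "\<lambda>S. (Z S)^2"] by (simp add: bern_expect_def)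

text \<open>Cantelli's inequality, from the pointwise bound \<open>[a \<le> z] \<le> (z + c)\<^sup>2 / (a + c)\<^sup>2\<close>
  with \<open>c = V / a\<close>.\<close>

lemma bern_cantelli:
  assumes "finite I" "p ` I \<subseteq> {0..1}" "bern_expect p I Z = 0"
    and V: "bern_expect p I (\<lambda>S. (Z S)^2) = V" and "0 < a"
  shows "bern_expect p I (\<lambda>S. of_bool (a \<le> Z S)) \<le> V / (V + a^2)"
proof -
  define c where "c = V / a"
  have "0 \<le> V" using bern_expect_square_nonneg[OF assms(2), of Z] V by simp
  then have c: "0 \<le> c" "0 < a + c" using \<open>0 < a\<close> by (auto simp: c_def add_pos_nonneg)
  have "bern_expect p I (\<lambda>S. of_bool (a \<le> Z S)) \<le> bern_expect p I (\<lambda>S. (Z S + c)^2 / (a + c)^2)"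
  proof (intro bern_expect_mono[OF assms(2)])
    fix S
    show "of_bool (a \<le> Z S) \<le> (Z S + c)^2 / (a + c)^2"
    proof (cases "a \<le> Z S")
      case True
      then have "(a + c)^2 \<le> (Z S + c)^2" using c by (intro power_mono) auto
      then show ?thesis using True c by simp
    qed simp
  qed
  also have "\<dots> = bern_expect p I (\<lambda>S. inverse ((a + c)^2) * ((Z S)^2 + (2 * c) * Z S + c^2))"
    by (intro bern_expect_cong) (simp add: power2_sum divide_inverse algebra_simps)
  also have "\<dots> = (V + c^2) / (a + c)^2"
    by (simp only: bern_expect_cmult bern_expect_add bern_expect_const[OF assms(1)] assms(3) V)
      (simp add: divide_inverse)
  also have "\<dots> = V / (V + a^2)"
  proof -
    have "0 < V + a^2" using \<open>0 < a\<close> \<open>0 \<le> V\<close> by (simp add: add_nonneg_pos)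
    moreover have "V + c^2 = V * (V + a^2) / a^2" "(a + c)^2 = (V + a^2)^2 / a^2"
      using \<open>0 < a\<close> by (simp_all add: c_def field_simps power2_eq_square)
    ultimately show ?thesis using \<open>0 < a\<close> by (simp add: power2_eq_square)
  qed
  finally show ?thesis .
qed

lemma bern_signed_deviation_moments:
  assumes "finite I" "\<bar>s\<bar> = 1"
  shows "bern_expect p I (\<lambda>S. s * (real (card S) - bern_mean p I)) = 0"
    and "bern_expect p I (\<lambda>S. (s * (real (card S) - bern_mean p I))^2) = bern_var p I"
    and "p ` I \<subseteq> {0..1} \<Longrightarrow>
      bern_expect p I (\<lambda>S. (s * (real (card S) - bern_mean p I))^4) \<le> 3 * (bern_var p I)^2 + bern_var p I"
proof -
  have s: "s^2 = 1" "s^4 = 1"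
    using assms(2) power2_abs[of s] power_mult[of s 2 2] by simp_all
  show "bern_expect p I (\<lambda>S. s * (real (card S) - bern_mean p I)) = 0"
    using bern_expect_centred[OF assms(1)] by (simp add: bern_expect_cmult)
  show "bern_expect p I (\<lambda>S. (s * (real (card S) - bern_mean p I))^2) = bern_var p I"
    using bern_expect_card_var[OF assms(1)] by (simp add: power_mult_distrib s)
  show "p ` I \<subseteq> {0..1} \<Longrightarrow>
      bern_expect p I (\<lambda>S. (s * (real (card S) - bern_mean p I))^4) \<le> 3 * (bern_var p I)^2 + bern_var p I"
    using bern_expect_card_fourth_moment[OF assms(1)] by (simp add: power_mult_distrib s)
qed

lemma bern_deviation_tail_le:
  assumes "finite I" "p ` I \<subseteq> {0..1}" "\<bar>s\<bar> = 1" "0 < a"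
  shows "bern_expect p I (\<lambda>S. of_bool (a \<le> s * (real (card S) - bern_mean p I)))
           \<le> bern_var p I / (bern_var p I + a^2)"
  using bern_cantelli[OF assms(1,2) bern_signed_deviation_moments(1,2)[OF assms(1,3)] assms(4)] .

lemma bern_deviation_tail_le_card:
  assumes "finite I" "p ` I \<subseteq> {0..1}" "\<bar>s\<bar> = 1" "0 < a"
  shows "bern_expect p I (\<lambda>S. of_bool (a \<le> s * (real (card S) - bern_mean p I)))
           \<le> real (card I) / (real (card I) + 4 * a^2)"
proof -
  define V where "V = bern_var p I"
  have "0 \<le> V" "4 * V \<le> real (card I)" using bern_var_nonneg[OF assms(2)] bern_var_le[of p I]
    by (simp_all add: V_def)
  moreover have "0 < V + a^2" using \<open>0 \<le> V\<close> assms(4) by (simp add: add_nonneg_pos)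
  ultimately have "V / (V + a^2) \<le> real (card I) / (real (card I) + 4 * a^2)"
    using assms(4) by (simp add: field_simps mult_right_mono)
  then show ?thesis using bern_deviation_tail_le[OF assms] by (simp add: V_def)
qed

text \<open>Taking expectations with \<open>T\<close>, \<open>b\<close> and \<open>l\<close> proportional to \<open>sqrt V\<close> turns this into a lower
  bound on the upper tail of a centred variable with variance \<open>V\<close> and fourth moment \<open>O(V\<^sup>2)\<close>
  (a Paley--Zygmund argument).\<close>

lemma paley_zygmund_pointwise:
  fixes z T b l :: real
  assumes "0 < T" "0 < b" "0 < l"
  shows "z^2 / (2 * T) - z^4 / (2 * T^3) + z / 2 \<le> b + z^2 / (2 * l) + l / 2 * of_bool (b \<le> z)"
proof -
  have "(z^2 - z^4 / T^2) / T \<le> \<bar>z\<bar>"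
  proof (cases "\<bar>z\<bar> \<le> T")
    case True
    have "z^2 = \<bar>z\<bar> * \<bar>z\<bar>" by (simp add: power2_eq_square)
    also have "\<dots> \<le> \<bar>z\<bar> * T" using True by (intro mult_left_mono) auto
    finally have "z^2 / T \<le> \<bar>z\<bar>" using \<open>0 < T\<close> by (simp add: field_simps)
    moreover have "0 \<le> z^4 / T^2 / T" using \<open>0 < T\<close> by simp
    ultimately show ?thesis by (simp add: diff_divide_distrib)
  next
    case False
    then have "T^2 \<le> z^2" using \<open>0 < T\<close> by (metis abs_ge_zero less_imp_le not_le power2_abs power_mono)
    then have "z^2 * T^2 \<le> z^2 * z^2" by (intro mult_left_mono) auto
    then have "z^2 \<le> z^4 / T^2" using \<open>0 < T\<close> by (simp add: field_simps power4_eq_xxxx power2_eq_square)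
    then have "(z^2 - z^4 / T^2) / T \<le> 0" using \<open>0 < T\<close> by (simp add: divide_nonpos_pos)
    then show ?thesis by simp
  qed
  moreover have "z^2 / (2 * T) - z^4 / (2 * T^3) + z / 2 = ((z^2 - z^4 / T^2) / T + z) / 2"
    using \<open>0 < T\<close> by (simp add: diff_divide_distrib add_divide_distrib power3_eq_cube power2_eq_square)
  ultimately have "z^2 / (2 * T) - z^4 / (2 * T^3) + z / 2 \<le> (\<bar>z\<bar> + z) / 2" by simp
  also have "\<dots> \<le> b + z^2 / (2 * l) + l / 2 * of_bool (b \<le> z)"
  proof (cases "b \<le> z")
    case True
    have "0 \<le> (z - l)^2 / (2 * l)" using \<open>0 < l\<close> by simp
    also have "\<dots> = z^2 / (2 * l) + l / 2 - z" using \<open>0 < l\<close> by (simp add: power2_eq_square field_simps)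
    finally show ?thesis using True \<open>0 < b\<close> by simp
  next
    case False
    have "0 \<le> z^2 / (2 * l)" using \<open>0 < l\<close> by simp
    moreover have "(\<bar>z\<bar> + z) / 2 \<le> b" using False \<open>0 < b\<close> by (cases "0 \<le> z") auto
    ultimately show ?thesis using False by simp
  qed
  finally show ?thesis .
qed

lemma bern_deviation_tail_ge:
  assumes "finite I" "p ` I \<subseteq> {0..1}" "\<bar>s\<bar> = 1" "1 \<le> bern_var p I"
  shows "3 / 4096 \<le> bern_expect p I (\<lambda>S. of_bool (sqrt (bern_var p I) / 32 \<le> s * (real (card S) - bern_mean p I)))"
proof -
  define V where "V = bern_var p I"
  define r where "r = sqrt V"
  define Z where "Z S = s * (real (card S) - bern_mean p I)" for S :: "'a set"
  define P where "P = bern_expect p I (\<lambda>S. of_bool (r / 32 \<le> Z S))"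
  have r: "1 \<le> r" "r^2 = V" using assms(4) by (auto simp: r_def V_def)
  note moments = bern_signed_deviation_moments[OF assms(1,3), of p, folded Z_def V_def]
  have EZ4: "bern_expect p I (\<lambda>S. (Z S)^4) \<le> 4 * r^4"
  proof -
    have "V \<le> V^2" using assms(4) by (simp add: V_def power2_eq_square)
    moreover have "r^4 = V^2" unfolding r(2)[symmetric] by (simp flip: power_mult)
    ultimately have "3 * V^2 + V \<le> 4 * r^4" by simp
    then show ?thesis using moments(3)[OF assms(2)] by linarith
  qed
  have "bern_expect p I (\<lambda>S. (1 / (16 * r)) * (Z S)^2 - (1 / (1024 * r^3)) * (Z S)^4 + (1/2) * Z S)
      \<le> bern_expect p I (\<lambda>S. r / 32 + (1 / (64 * r)) * (Z S)^2 + (16 * r) * of_bool (r / 32 \<le> Z S))"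
  proof (intro bern_expect_mono[OF assms(2)])
    fix S
    show "(1 / (16 * r)) * (Z S)^2 - (1 / (1024 * r^3)) * (Z S)^4 + (1/2) * Z S
        \<le> r / 32 + (1 / (64 * r)) * (Z S)^2 + (16 * r) * of_bool (r / 32 \<le> Z S)"
      using paley_zygmund_pointwise[of "8 * r" "r / 32" "32 * r" "Z S"] r(1)
      by (simp add: power_mult_distrib)
  qed
  then have "V / (16 * r) - bern_expect p I (\<lambda>S. (Z S)^4) / (1024 * r^3) \<le> r / 32 + V / (64 * r) + 16 * r * P"
    by (simp only: bern_expect_add bern_expect_diff bern_expect_cmult bern_expect_const[OF assms(1)]
        moments(1,2) P_def) simp
  moreover have "bern_expect p I (\<lambda>S. (Z S)^4) / (1024 * r^3) \<le> r / 256"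
    using EZ4 r by (simp add: field_simps power3_eq_cube power4_eq_xxxx)
  moreover have "V / (16 * r) = r / 16" "V / (64 * r) = r / 64"
    using r by (auto simp: power2_eq_square)
  ultimately have "r * 3 \<le> r * (4096 * P)" by linarith
  then have "3 / 4096 \<le> P" using r(1) by simp
  then show ?thesis by (simp add: P_def Z_def r_def V_def)
qed

lemma bern_deviation_tail_ge_of_var:
  assumes "finite I" "p ` I \<subseteq> {0..1}" "\<bar>s\<bar> = 1" "1 \<le> w" "w \<le> bern_var p I"
  shows "3 / 4096 \<le> bern_expect p I (\<lambda>S. of_bool (sqrt w / 32 \<le> s * (real (card S) - bern_mean p I)))"
proof -
  have "3 / 4096
      \<le> bern_expect p I (\<lambda>S. of_bool (sqrt (bern_var p I) / 32 \<le> s * (real (card S) - bern_mean p I)))"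
    using assms by (intro bern_deviation_tail_ge) auto
  also have "\<dots> \<le> bern_expect p I (\<lambda>S. of_bool (sqrt w / 32 \<le> s * (real (card S) - bern_mean p I)))"
    using assms(2,5) by (intro bern_expect_indicator_mono) (auto intro: order_trans[rotated])
  finally show ?thesis .
qed

lemma bern_deviation_tail_split:
  assumes "finite I" "J \<subseteq> I" "p ` I \<subseteq> {0..1}"
  shows "bern_expect p J (\<lambda>S. of_bool (a \<le> s * (real (card S) - bern_mean p J)))
       * bern_expect p (I - J) (\<lambda>S. of_bool (b \<le> s * (real (card S) - bern_mean p (I - J))))
     \<le> bern_expect p I (\<lambda>S. of_bool (a + b \<le> s * (real (card S) - bern_mean p I)))"
proof -
  have fin: "finite J" "finite (I - J)" and I: "I = J \<union> (I - J)" "J \<inter> (I - J) = {}"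
    using assms(1,2) finite_subset by auto
  have "bern_expect p J (\<lambda>S. of_bool (a \<le> s * (real (card S) - bern_mean p J)))
       * bern_expect p (I - J) (\<lambda>S. of_bool (b \<le> s * (real (card S) - bern_mean p (I - J))))
     = bern_expect p I (\<lambda>S. of_bool (a \<le> s * (real (card (S \<inter> J)) - bern_mean p J))
       * of_bool (b \<le> s * (real (card (S \<inter> (I - J))) - bern_mean p (I - J))))"
    by (subst (3) I(1)) (rule bern_expect_indep[OF fin I(2), symmetric])
  also have "\<dots> \<le> bern_expect p I (\<lambda>S. of_bool (a + b \<le> s * (real (card S) - bern_mean p I)))"
  proof (intro bern_expect_mono[OF assms(3)])
    fix S assume "S \<subseteq> I"
    then have "card S = card (S \<inter> J) + card (S \<inter> (I - J))"
      using fin by (subst card_Un_disjoint[symmetric]) (auto intro: arg_cong[where f = card])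
    moreover have "bern_mean p I = bern_mean p J + bern_mean p (I - J)"
      using bern_mean_diff[OF assms(1,2), of p] by simp
    ultimately have "s * (real (card S) - bern_mean p I)
        = s * (real (card (S \<inter> J)) - bern_mean p J) + s * (real (card (S \<inter> (I - J))) - bern_mean p (I - J))"
      by (simp add: algebra_simps)
    then show "of_bool (a \<le> s * (real (card (S \<inter> J)) - bern_mean p J))
        * of_bool (b \<le> s * (real (card (S \<inter> (I - J))) - bern_mean p (I - J)))
      \<le> (of_bool (a + b \<le> s * (real (card S) - bern_mean p I)) :: real)"
      by auto
  qed
  finally show ?thesis .
qed

lemma bern_var_subset_between:
  assumes "finite I" "0 \<le> x" "x \<le> bern_var p I"
  shows "\<exists>J\<subseteq>I. x \<le> bern_var p J \<and> bern_var p J \<le> x + 1/4"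
  using assms
proof (induction I rule: finite_induct)
  case (insert j I)
  show ?case
  proof (cases "x \<le> bern_var p I")
    case True
    then show ?thesis using insert.IH[OF insert(4)] by blast
  next
    case False
    have "bern_var p (insert j I) = p j * (1 - p j) + bern_var p I"
      using insert(1,2) by (simp add: bern_var_def)
    then have "bern_var p (insert j I) \<le> x + 1/4"
      using False mult_one_minus_le_quarter[of "p j"] by linarith
    then show ?thesis using insert(5) by blast
  qed
qed (auto simp: bern_var_def)

text \<open>Anti-concentration by splitting the index set into \<open>m + 1\<close> blocks of variance about \<open>w\<close>:
  by independence, with probability at least \<open>(3/4096)^(m+1)\<close> every block deviates by at least
  \<open>sqrt w / 32\<close> in the direction \<open>s\<close>.\<close>

lemma bern_deviation_tail_ge_blocks:
  assumes "finite I" "p ` I \<subseteq> {0..1}" "\<bar>s\<bar> = 1" "1 \<le> w"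
    and "real (Suc m) * (w + 1/4) \<le> bern_var p I"
  shows "(3/4096)^Suc m
    \<le> bern_expect p I (\<lambda>S. of_bool (real (Suc m) * sqrt w / 32 \<le> s * (real (card S) - bern_mean p I)))"
  using assms(1,2,5)
proof (induction m arbitrary: I)
  case 0
  then have "w \<le> bern_var p I" by simp
  then show ?case using bern_deviation_tail_ge_of_var[OF 0(1,2) assms(3,4)] by simp
next
  case (Suc m)
  have step: "real (Suc (Suc m)) * (w + 1/4) = (w + 1/4) + real (Suc m) * (w + 1/4)"
    by (simp add: algebra_simps)
  moreover have "0 \<le> real (Suc m) * (w + 1/4)" using assms(4) by simp
  ultimately have "w \<le> bern_var p I" using Suc(4) by linarith
  then obtain J where J: "J \<subseteq> I" "w \<le> bern_var p J" "bern_var p J \<le> w + 1/4"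
    using bern_var_subset_between[OF Suc(2)] assms(4) by (meson order_trans zero_le_one)
  have "real (Suc m) * (w + 1/4) \<le> bern_var p (I - J)"
    using bern_var_diff[OF Suc(2) J(1), of p] J(3) Suc(4) step by simp
  then have tail_rest: "(3/4096)^Suc m \<le> bern_expect p (I - J)
      (\<lambda>S. of_bool (real (Suc m) * sqrt w / 32 \<le> s * (real (card S) - bern_mean p (I - J))))"
    using Suc.IH[of "I - J"] Suc(2,3) by auto
  have tail_J: "3/4096 \<le> bern_expect p J (\<lambda>S. of_bool (sqrt w / 32 \<le> s * (real (card S) - bern_mean p J)))"
    using J Suc(2,3) finite_subset by (intro bern_deviation_tail_ge_of_var[OF _ _ assms(3,4)]) auto
  have "(3/4096::real)^Suc (Suc m)
      \<le> bern_expect p J (\<lambda>S. of_bool (sqrt w / 32 \<le> s * (real (card S) - bern_mean p J)))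
        * bern_expect p (I - J) (\<lambda>S. of_bool (real (Suc m) * sqrt w / 32 \<le> s * (real (card S) - bern_mean p (I - J))))"
    unfolding power_Suc[of _ "Suc m"] by (rule mult_mono[OF tail_J tail_rest]) (use tail_J in auto)
  also have "\<dots> \<le> bern_expect p I
      (\<lambda>S. of_bool (sqrt w / 32 + real (Suc m) * sqrt w / 32 \<le> s * (real (card S) - bern_mean p I)))"
    by (rule bern_deviation_tail_split[OF Suc(2) J(1) Suc(3)])
  finally show ?case by (simp add: add_divide_distrib algebra_simps)
qed

text \<open>With \<open>m + 1 \<ge> 2048 K\<^sup>2\<close> blocks the accumulated deviation \<open>(m + 1) sqrt w / 32\<close> exceeds
  \<open>K sqrt V\<close>.\<close>

lemma bern_anti_concentration:
  obtains V0 \<eta> :: real where "0 < \<eta>"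
    and "\<And>p I s. finite I \<Longrightarrow> p ` I \<subseteq> {0..1} \<Longrightarrow> V0 \<le> bern_var p I \<Longrightarrow> \<bar>s\<bar> = 1 \<Longrightarrow>
      \<eta> \<le> bern_expect p I (\<lambda>S. of_bool (K * sqrt (bern_var p I) \<le> s * (real (card S) - bern_mean p I)))"
proof
  define m where "m = nat \<lceil>2048 * K^2\<rceil>"
  show "0 < (3/4096::real)^Suc m" by simp
  fix p I and s :: real
  assume fin: "finite I" and probs: "p ` I \<subseteq> {0..1}" and V0: "2 * real (Suc m) \<le> bern_var p I"
    and s: "\<bar>s\<bar> = 1"
  define V where "V = bern_var p I"
  define w where "w = V / real (Suc m) - 1/4"
  have V: "2 \<le> V / real (Suc m)" "0 \<le> V" using V0 by (simp_all add: V_def field_simps)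
  have "2048 * K^2 \<le> real (Suc m)" using le_of_int_ceiling[of "2048 * K^2"] m_def by linarith
  then have M: "K^2 \<le> real (Suc m) / 2048" by simp
  have w: "1 \<le> w" using V(1) by (simp add: w_def)
  have "K * sqrt V \<le> real (Suc m) * sqrt w / 32"
  proof (rule power2_le_imp_le)
    have "(K * sqrt V)^2 = K^2 * V" using V0 by (simp add: V_def power_mult_distrib)
    also have "\<dots> \<le> (real (Suc m) / 2048) * V"
      using mult_right_mono[OF M V(2)] .
    also have "\<dots> \<le> real (Suc m)^2 * w / 1024"
    proof -
      have "real (Suc m)^2 * w = real (Suc m) * V - real (Suc m)^2 / 4"
        by (simp add: w_def power2_eq_square field_simps)
      moreover have "real (Suc m)^2 / 4 \<le> real (Suc m) * V / 2"
        using mult_left_mono[of "real (Suc m)" "V / 2" "real (Suc m) / 2"] V0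
        by (simp add: V_def power2_eq_square)
      ultimately show ?thesis by (simp add: algebra_simps)
    qed
    also have "\<dots> = (real (Suc m) * sqrt w / 32)^2" using w by (simp add: power_mult_distrib power_divide)
    finally show "(K * sqrt V)^2 \<le> (real (Suc m) * sqrt w / 32)^2" .
  qed (use w in simp)
  moreover have "real (Suc m) * (w + 1/4) \<le> bern_var p I" by (simp add: w_def V_def)
  note bern_deviation_tail_ge_blocks[OF fin probs s w this]
  ultimately show "(3/4096)^Suc m
      \<le> bern_expect p I (\<lambda>S. of_bool (K * sqrt (bern_var p I) \<le> s * (real (card S) - bern_mean p I)))"
    by (elim order_trans, intro bern_expect_indicator_mono[OF probs]) (auto simp: V_def)
qed

section \<open>Winning probabilities\<close>

abbreviation vote_probs :: "(wstate \<Rightarrow> real) \<Rightarrow> wstate \<Rightarrow> (nat \<Rightarrow> strategy) \<Rightarrow> nat \<Rightarrow> real" where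
  "vote_probs Ph w \<Sigma> \<equiv> \<lambda>n. voteA_prob Ph w (\<Sigma> n)"

lemma voteA_prob_bounds:
  "valid_strategy \<sigma> \<Longrightarrow> 0 \<le> Ph w \<Longrightarrow> Ph w \<le> 1 \<Longrightarrow> 0 \<le> voteA_prob Ph w \<sigma> \<and> voteA_prob Ph w \<sigma> \<le> 1"
  unfolding voteA_prob_def valid_strategy_def
  using convex_bound_le[of "fst \<sigma>" 1 "snd \<sigma>" "1 - Ph w" "Ph w"] by simp

lemma vote_probs_bounds:
  "\<forall>n<N. valid_strategy (\<Sigma> n) \<Longrightarrow> 0 \<le> Ph w \<Longrightarrow> Ph w \<le> 1 \<Longrightarrow> vote_probs Ph w \<Sigma> ` {..<N} \<subseteq> {0..1}"
  unfolding image_subset_iff atLeastAtMost_iff using voteA_prob_bounds by blast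

lemma sum_set_weight_filter:
  "(\<Sum>S | S \<subseteq> {..<N} \<and> P S. set_weight p N S) = bern_expect p {..<N} (\<lambda>S. of_bool (P S))"
proof -
  have "{S. S \<subseteq> {..<N} \<and> P S} = {S \<in> Pow {..<N}. P S}" by auto
  then have "(\<Sum>S | S \<subseteq> {..<N} \<and> P S. set_weight p N S)
      = (\<Sum>S\<in>Pow {..<N}. if P S then set_weight p N S else 0)"
    using sum.inter_filter[of "Pow {..<N}" "set_weight p N" P] by simp
  also have "\<dots> = bern_expect p {..<N} (\<lambda>S. of_bool (P S))"
    unfolding bern_expect_def by (intro sum.cong) (simp_all add: bern_weight_def set_weight_def)
  finally show ?thesis .
qed

lemma winA_eq_bern_expect:
  "winA \<mu> Ph N \<Sigma> w = bern_expect (vote_probs Ph w \<Sigma>) {..<N} (\<lambda>S. of_bool (\<mu> * real N \<le> real (card S)))"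
  unfolding winA_def by (rule sum_set_weight_filter)

lemma winR_eq_bern_expect:
  "winR \<mu> Ph N \<Sigma> w = bern_expect (vote_probs Ph w \<Sigma>) {..<N} (\<lambda>S. of_bool (real (card S) < \<mu> * real N))"
  unfolding winR_def by (rule sum_set_weight_filter)

lemma winR_eq: "winR \<mu> Ph N \<Sigma> w = 1 - winA \<mu> Ph N \<Sigma> w"
proof -
  have "winR \<mu> Ph N \<Sigma> w + winA \<mu> Ph N \<Sigma> w = bern_expect (vote_probs Ph w \<Sigma>) {..<N} (\<lambda>_. 1)"
    unfolding winR_eq_bern_expect winA_eq_bern_expect bern_expect_add[symmetric]
    by (intro bern_expect_cong) auto
  then show ?thesis by (simp add: bern_expect_const)
qed

lemma winA_bounds:
  "\<forall>n<N. valid_strategy (\<Sigma> n) \<Longrightarrow> 0 \<le> Ph w \<Longrightarrow> Ph w \<le> 1 \<Longrightarrow>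
    0 \<le> winA \<mu> Ph N \<Sigma> w \<and> winA \<mu> Ph N \<Sigma> w \<le> 1"
  unfolding winA_eq_bern_expect using bern_expect_indicator_bounds[OF _ vote_probs_bounds] by auto

lemma winA_mono:
  assumes "\<forall>n<N. 0 \<le> voteA_prob Ph w (\<Sigma> n) \<and> voteA_prob Ph w (\<Sigma> n) \<le> voteA_prob Ph w (\<Sigma>' n)
      \<and> voteA_prob Ph w (\<Sigma>' n) \<le> 1"
  shows "winA \<mu> Ph N \<Sigma> w \<le> winA \<mu> Ph N \<Sigma>' w"
  unfolding winA_eq_bern_expect
proof (rule bern_expect_mono_prob)
  fix S T :: "nat set" assume "S \<subseteq> T" "T \<subseteq> {..<N}"
  then have "card S \<le> card T" by (meson card_mono finite_lessThan finite_subset)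
  then show "(of_bool (\<mu> * real N \<le> real (card S)) :: real) \<le> of_bool (\<mu> * real N \<le> real (card T))"
    by auto
qed (use assms in auto)

lemma var_votes_eq: "var_votes Ph N \<Sigma> w = bern_var (vote_probs Ph w \<Sigma>) {..<N}"
  using bern_expect_card[of "{..<N}" "vote_probs Ph w \<Sigma>"]
    bern_expect_card_var[of "{..<N}" "vote_probs Ph w \<Sigma>"]
  by (simp add: var_votes_def Let_def bern_expect_def set_weight_def bern_weight_def)

lemma excess_eq:
  assumes "0 < N"
  shows "excess Ph \<mu> N \<Sigma> = min (bern_mean (vote_probs Ph Hi \<Sigma>) {..<N} / real N - \<mu>)
                                  (\<mu> - bern_mean (vote_probs Ph Lo \<Sigma>) {..<N} / real N)"
proof -
  have "(\<Sum>n<N. 1 - voteA_prob Ph Lo (\<Sigma> n)) / real N - (1 - \<mu>)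
      = \<mu> - bern_mean (vote_probs Ph Lo \<Sigma>) {..<N} / real N"
    using assms by (simp add: sum_subtractf bern_mean_def field_simps)
  then show ?thesis unfolding excess_def by (simp add: bern_mean_def)
qed

lemma excess_margins:
  assumes "0 < N"
  shows "real N * excess Ph \<mu> N \<Sigma> \<le> bern_mean (vote_probs Ph Hi \<Sigma>) {..<N} - \<mu> * real N"
    and "real N * excess Ph \<mu> N \<Sigma> \<le> \<mu> * real N - bern_mean (vote_probs Ph Lo \<Sigma>) {..<N}"
    and "real N * excess Ph \<mu> N \<Sigma> = bern_mean (vote_probs Ph Hi \<Sigma>) {..<N} - \<mu> * real N
       \<or> real N * excess Ph \<mu> N \<Sigma> = \<mu> * real N - bern_mean (vote_probs Ph Lo \<Sigma>) {..<N}"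
  using assms unfolding excess_eq[OF assms] min_def by (auto simp: field_simps)

lemma excess_ge_of_margins:
  assumes "0 < N"
    and "real N * c - 1 \<le> bern_mean (vote_probs Ph Hi \<Sigma>) {..<N} - \<mu> * real N"
    and "real N * c - 1 \<le> \<mu> * real N - bern_mean (vote_probs Ph Lo \<Sigma>) {..<N}"
  shows "c - 1 / real N \<le> excess Ph \<mu> N \<Sigma>"
proof -
  have "c - 1 / real N \<le> x / real N" if "real N * c - 1 \<le> x" for x
    using divide_right_mono[OF that, of "real N"] assms(1) by (simp add: diff_divide_distrib)
  from this[OF assms(2)] this[OF assms(3)] show ?thesis
    using assms(1) unfolding excess_eq[OF assms(1)] by (simp add: diff_divide_distrib)
qed

lemma excess_lt_cases:
  assumes "0 < N" "sqrt (real N) * excess Ph \<mu> N \<Sigma> < b"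
  shows "bern_mean (vote_probs Ph Hi \<Sigma>) {..<N} - \<mu> * real N < b * sqrt (real N)
       \<or> \<mu> * real N - bern_mean (vote_probs Ph Lo \<Sigma>) {..<N} < b * sqrt (real N)"
proof -
  have "real N * excess Ph \<mu> N \<Sigma> = sqrt (real N) * (sqrt (real N) * excess Ph \<mu> N \<Sigma>)"
    by (simp add: mult.assoc[symmetric])
  also have "\<dots> < sqrt (real N) * b" using assms by (intro mult_strict_left_mono) auto
  also have "\<dots> = b * sqrt (real N)" by (rule mult.commute)
  finally show ?thesis using excess_margins(3)[OF assms(1), of Ph \<mu> \<Sigma>] by linarith
qed

definition error_prob :: "real \<Rightarrow> (wstate \<Rightarrow> real) \<Rightarrow> nat \<Rightarrow> (nat \<Rightarrow> strategy) \<Rightarrow> wstate \<Rightarrow> real" where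
  "error_prob \<mu> Ph N \<Sigma> w = (case w of Hi \<Rightarrow> winR \<mu> Ph N \<Sigma> Hi | Lo \<Rightarrow> winA \<mu> Ph N \<Sigma> Lo)"

lemma error_prob_simps [simp]:
  "error_prob \<mu> Ph N \<Sigma> Hi = 1 - winA \<mu> Ph N \<Sigma> Hi"
  "error_prob \<mu> Ph N \<Sigma> Lo = winA \<mu> Ph N \<Sigma> Lo"
  by (simp_all add: error_prob_def winR_eq)

lemma error_prob_bounds:
  "\<forall>n<N. valid_strategy (\<Sigma> n) \<Longrightarrow> 0 \<le> Ph w \<Longrightarrow> Ph w \<le> 1 \<Longrightarrow>
    0 \<le> error_prob \<mu> Ph N \<Sigma> w \<and> error_prob \<mu> Ph N \<Sigma> w \<le> 1"
  using winA_bounds[of N \<Sigma> Ph w \<mu>] by (cases w) auto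

lemma winA_le_deviation_tail:
  assumes "a \<le> \<mu> * real N - bern_mean (vote_probs Ph w \<Sigma>) {..<N}"
    and "vote_probs Ph w \<Sigma> ` {..<N} \<subseteq> {0..1}"
  shows "winA \<mu> Ph N \<Sigma> w \<le> bern_expect (vote_probs Ph w \<Sigma>) {..<N}
    (\<lambda>S. of_bool (a \<le> 1 * (real (card S) - bern_mean (vote_probs Ph w \<Sigma>) {..<N})))"
  unfolding winA_eq_bern_expect using assms by (intro bern_expect_indicator_mono) auto

lemma winR_le_deviation_tail:
  assumes "a \<le> bern_mean (vote_probs Ph w \<Sigma>) {..<N} - \<mu> * real N"
    and "vote_probs Ph w \<Sigma> ` {..<N} \<subseteq> {0..1}"
  shows "winR \<mu> Ph N \<Sigma> w \<le> bern_expect (vote_probs Ph w \<Sigma>) {..<N}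
    (\<lambda>S. of_bool (a \<le> -1 * (real (card S) - bern_mean (vote_probs Ph w \<Sigma>) {..<N})))"
  unfolding winR_eq_bern_expect using assms by (intro bern_expect_indicator_mono) auto

lemma winA_ge_deviation_tail:
  assumes "\<mu> * real N - bern_mean (vote_probs Ph w \<Sigma>) {..<N} \<le> a"
    and "vote_probs Ph w \<Sigma> ` {..<N} \<subseteq> {0..1}"
  shows "bern_expect (vote_probs Ph w \<Sigma>) {..<N}
    (\<lambda>S. of_bool (a \<le> 1 * (real (card S) - bern_mean (vote_probs Ph w \<Sigma>) {..<N}))) \<le> winA \<mu> Ph N \<Sigma> w"
  unfolding winA_eq_bern_expect using assms by (intro bern_expect_indicator_mono) auto

lemma winR_ge_deviation_tail:
  assumes "bern_mean (vote_probs Ph w \<Sigma>) {..<N} - \<mu> * real N < a"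
    and "vote_probs Ph w \<Sigma> ` {..<N} \<subseteq> {0..1}"
  shows "bern_expect (vote_probs Ph w \<Sigma>) {..<N}
    (\<lambda>S. of_bool (a \<le> -1 * (real (card S) - bern_mean (vote_probs Ph w \<Sigma>) {..<N}))) \<le> winR \<mu> Ph N \<Sigma> w"
  unfolding winR_eq_bern_expect using assms by (intro bern_expect_indicator_mono) auto

lemma error_prob_le:
  assumes "0 < N" "\<forall>n<N. valid_strategy (\<Sigma> n)" "0 \<le> Ph w" "Ph w \<le> 1"
    and "0 < c" "c \<le> excess Ph \<mu> N \<Sigma>"
  shows "error_prob \<mu> Ph N \<Sigma> w \<le> 1 / (4 * real N * c^2)"
proof -
  define a where "a = real N * c"
  have "0 < a" using assms(1,5) by (simp add: a_def)
  have margins: "a \<le> bern_mean (vote_probs Ph Hi \<Sigma>) {..<N} - \<mu> * real N"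
      "a \<le> \<mu> * real N - bern_mean (vote_probs Ph Lo \<Sigma>) {..<N}"
    using excess_margins(1,2)[OF assms(1), of Ph \<mu> \<Sigma>] mult_left_mono[OF assms(6), of "real N"]
    by (simp_all add: a_def)
  have probs: "vote_probs Ph w \<Sigma> ` {..<N} \<subseteq> {0..1}" by (rule vote_probs_bounds) (use assms in auto)
  have "real N / (real N + 4 * a^2) \<le> real N / (4 * a^2)"
    using \<open>0 < a\<close> by (simp add: frac_le add_nonneg_pos)
  also have "\<dots> = 1 / (4 * real N * c^2)"
    using assms(1,5) by (simp add: a_def power2_eq_square field_simps)
  finally have tail: "bern_expect (vote_probs Ph w \<Sigma>) {..<N}
      (\<lambda>S. of_bool (a \<le> s * (real (card S) - bern_mean (vote_probs Ph w \<Sigma>) {..<N})))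
      \<le> 1 / (4 * real N * c^2)" if "\<bar>s\<bar> = 1" for s
    using bern_deviation_tail_le_card[OF _ probs that \<open>0 < a\<close>] by simp
  show ?thesis
  proof (cases w)
    case Hi
    have "error_prob \<mu> Ph N \<Sigma> w = winR \<mu> Ph N \<Sigma> w" by (simp add: Hi winR_eq)
    also have "\<dots> \<le> bern_expect (vote_probs Ph w \<Sigma>) {..<N}
        (\<lambda>S. of_bool (a \<le> -1 * (real (card S) - bern_mean (vote_probs Ph w \<Sigma>) {..<N})))"
      by (rule winR_le_deviation_tail[OF _ probs]) (use margins in \<open>simp add: Hi\<close>)
    finally show ?thesis using tail[of "-1"] by simp
  next
    case Lo
    have "error_prob \<mu> Ph N \<Sigma> w = winA \<mu> Ph N \<Sigma> w" by (simp add: Lo)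
    also have "\<dots> \<le> bern_expect (vote_probs Ph w \<Sigma>) {..<N}
        (\<lambda>S. of_bool (a \<le> 1 * (real (card S) - bern_mean (vote_probs Ph w \<Sigma>) {..<N})))"
      by (rule winA_le_deviation_tail[OF _ probs]) (use margins in \<open>simp add: Lo\<close>)
    finally show ?thesis using tail[of 1] by simp
  qed
qed

lemma error_prob_tendsto_zero:
  fixes \<Sigma> :: "nat \<Rightarrow> nat \<Rightarrow> strategy"
  assumes valid: "\<forall>N\<ge>1. \<forall>n<N. valid_strategy (\<Sigma> N n)" and "0 \<le> Ph w" "Ph w \<le> 1"
    and lim: "filterlim (\<lambda>N. sqrt (real N) * excess Ph \<mu> N (\<Sigma> N)) at_top sequentially"
  shows "(\<lambda>N. error_prob \<mu> Ph N (\<Sigma> N) w) \<longlonglongrightarrow> 0"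
proof -
  define g where "g N = sqrt (real N) * excess Ph \<mu> N (\<Sigma> N)" for N
  have "filterlim (\<lambda>N. 4 * (g N)^2) at_top sequentially"
    using lim unfolding g_def
    by (intro filterlim_tendsto_pos_mult_at_top[OF tendsto_const] filterlim_pow_at_top) auto
  then have bound_tendsto: "(\<lambda>N. inverse (4 * (g N)^2)) \<longlonglongrightarrow> 0" by (rule tendsto_inverse_0_at_top)
  have "eventually (\<lambda>N. 1 \<le> N \<and> 0 < g N) sequentially"
    using eventually_ge_at_top[of 1] lim[unfolded filterlim_at_top_dense, rule_format, of 0]
    by eventually_elim (simp add: g_def)
  then have ev: "eventually (\<lambda>N. 0 \<le> error_prob \<mu> Ph N (\<Sigma> N) w
      \<and> error_prob \<mu> Ph N (\<Sigma> N) w \<le> inverse (4 * (g N)^2)) sequentially"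
  proof eventually_elim
    case (elim N)
    then have pos: "0 < excess Ph \<mu> N (\<Sigma> N)" by (simp add: g_def zero_less_mult_iff)
    have valid_N: "\<forall>n<N. valid_strategy (\<Sigma> N n)" using valid elim by simp
    have "error_prob \<mu> Ph N (\<Sigma> N) w \<le> 1 / (4 * real N * (excess Ph \<mu> N (\<Sigma> N))^2)"
      by (rule error_prob_le[OF _ valid_N assms(2,3) pos order_refl]) (use elim in simp)
    moreover have "0 \<le> error_prob \<mu> Ph N (\<Sigma> N) w"
      using error_prob_bounds[of N "\<Sigma> N" Ph w, OF valid_N assms(2,3)] by simp
    moreover have "(g N)^2 = real N * (excess Ph \<mu> N (\<Sigma> N))^2"
      by (simp add: g_def power_mult_distrib)
    then have "inverse (4 * (g N)^2) = 1 / (4 * real N * (excess Ph \<mu> N (\<Sigma> N))^2)"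
      by (simp add: inverse_eq_divide mult.assoc)
    ultimately show ?case by simp
  qed
  show ?thesis
    by (rule tendsto_sandwich[OF eventually_mono[OF ev] eventually_mono[OF ev] tendsto_const bound_tendsto])
      simp_all
qed

lemma error_prob_ge_of_negative_excess:
  assumes "0 < N" "\<forall>n<N. valid_strategy (\<Sigma> n)" "\<forall>w. 0 \<le> Ph w \<and> Ph w \<le> 1"
    and "0 < c" "sqrt (real N) * excess Ph \<mu> N \<Sigma> < - c"
  shows "\<exists>w. 4 * c^2 / (1 + 4 * c^2) \<le> error_prob \<mu> Ph N \<Sigma> w"
proof -
  define a where "a = c * sqrt (real N)"
  have "0 < a" using assms(1,4) by (simp add: a_def)
  have probs: "vote_probs Ph w \<Sigma> ` {..<N} \<subseteq> {0..1}" for w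
    by (rule vote_probs_bounds) (use assms(2,3) in auto)
  have "real N + 4 * a^2 = real N * (1 + 4 * c^2)"
    by (simp add: a_def power_mult_distrib algebra_simps)
  moreover have "0 < 1 + 4 * c^2" by (simp add: add_pos_nonneg)
  ultimately have "real N / (real N + 4 * a^2) = 1 - 4 * c^2 / (1 + 4 * c^2)"
    using assms(1) by (simp add: diff_divide_eq_iff)
  then have tail: "bern_expect (vote_probs Ph w \<Sigma>) {..<N}
      (\<lambda>S. of_bool (a \<le> s * (real (card S) - bern_mean (vote_probs Ph w \<Sigma>) {..<N})))
      \<le> 1 - 4 * c^2 / (1 + 4 * c^2)" if "\<bar>s\<bar> = 1" for s w
    using bern_deviation_tail_le_card[OF _ probs that \<open>0 < a\<close>] by simp
  from excess_lt_cases[OF assms(1,5)] show ?thesis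
  proof
    assume "bern_mean (vote_probs Ph Hi \<Sigma>) {..<N} - \<mu> * real N < - c * sqrt (real N)"
    then have "winA \<mu> Ph N \<Sigma> Hi \<le> bern_expect (vote_probs Ph Hi \<Sigma>) {..<N}
        (\<lambda>S. of_bool (a \<le> 1 * (real (card S) - bern_mean (vote_probs Ph Hi \<Sigma>) {..<N})))"
      by (intro winA_le_deviation_tail[OF _ probs]) (simp add: a_def)
    then have "winA \<mu> Ph N \<Sigma> Hi \<le> 1 - 4 * c^2 / (1 + 4 * c^2)" using tail[of 1 Hi] by simp
    then show ?thesis by (intro exI[of _ Hi]) simp
  next
    assume "\<mu> * real N - bern_mean (vote_probs Ph Lo \<Sigma>) {..<N} < - c * sqrt (real N)"
    then have "winR \<mu> Ph N \<Sigma> Lo \<le> bern_expect (vote_probs Ph Lo \<Sigma>) {..<N}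
        (\<lambda>S. of_bool (a \<le> -1 * (real (card S) - bern_mean (vote_probs Ph Lo \<Sigma>) {..<N})))"
      by (intro winR_le_deviation_tail[OF _ probs]) (simp add: a_def)
    then have "winR \<mu> Ph N \<Sigma> Lo \<le> 1 - 4 * c^2 / (1 + 4 * c^2)" using tail[of "-1" Lo] by simp
    then show ?thesis by (intro exI[of _ Lo]) (simp add: winR_eq)
  qed
qed

lemma error_prob_ge_of_deviation_tails:
  assumes "0 < N" "\<forall>n<N. valid_strategy (\<Sigma> n)" "\<forall>w. 0 \<le> Ph w \<and> Ph w \<le> 1"
    and "sqrt (real N) * excess Ph \<mu> N \<Sigma> < M"
    and tail: "\<And>w s. \<bar>s\<bar> = 1 \<Longrightarrow> \<eta> \<le> bern_expect (vote_probs Ph w \<Sigma>) {..<N}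
      (\<lambda>S. of_bool (M * sqrt (real N) \<le> s * (real (card S) - bern_mean (vote_probs Ph w \<Sigma>) {..<N})))"
  shows "\<exists>w. \<eta> \<le> error_prob \<mu> Ph N \<Sigma> w"
proof -
  have probs: "vote_probs Ph w \<Sigma> ` {..<N} \<subseteq> {0..1}" for w
    by (rule vote_probs_bounds) (use assms(2,3) in auto)
  from excess_lt_cases[OF assms(1,4)] show ?thesis
  proof
    assume margin: "bern_mean (vote_probs Ph Hi \<Sigma>) {..<N} - \<mu> * real N < M * sqrt (real N)"
    have "\<eta> \<le> bern_expect (vote_probs Ph Hi \<Sigma>) {..<N} (\<lambda>S. of_bool
        (M * sqrt (real N) \<le> -1 * (real (card S) - bern_mean (vote_probs Ph Hi \<Sigma>) {..<N})))"
      by (rule tail) simp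
    also have "\<dots> \<le> winR \<mu> Ph N \<Sigma> Hi" by (rule winR_ge_deviation_tail[OF margin probs])
    finally have "\<eta> \<le> winR \<mu> Ph N \<Sigma> Hi" .
    then show ?thesis by (intro exI[of _ Hi]) (simp add: winR_eq)
  next
    assume margin: "\<mu> * real N - bern_mean (vote_probs Ph Lo \<Sigma>) {..<N} < M * sqrt (real N)"
    have "\<eta> \<le> bern_expect (vote_probs Ph Lo \<Sigma>) {..<N} (\<lambda>S. of_bool
        (M * sqrt (real N) \<le> 1 * (real (card S) - bern_mean (vote_probs Ph Lo \<Sigma>) {..<N})))"
      by (rule tail) simp
    also have "\<dots> \<le> winA \<mu> Ph N \<Sigma> Lo" by (rule winA_ge_deviation_tail[OF less_imp_le[OF margin] probs])
    finally have "\<eta> \<le> winA \<mu> Ph N \<Sigma> Lo" .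
    then show ?thesis by (intro exI[of _ Lo]) simp
  qed
qed

section \<open>Coalitional deviations from a regular profile\<close>

text \<open>The utility change of an agent with utilities \<open>u\<close> when the prior-weighted probabilities
  that A wins in states H and L change by \<open>x\<close> and \<open>y\<close>.\<close>

definition util_gain :: "(wstate \<Rightarrow> outcome \<Rightarrow> nat) \<Rightarrow> real \<Rightarrow> real \<Rightarrow> real" where
  "util_gain u x y = (real (u Hi Acc) - real (u Hi Rej)) * x + (real (u Lo Acc) - real (u Lo Rej)) * y"

lemma exp_util_diff:
  "exp_util prior Ph \<mu> N \<Sigma>' u - exp_util prior Ph \<mu> N \<Sigma> u =
     util_gain u (prior Hi * (winA \<mu> Ph N \<Sigma>' Hi - winA \<mu> Ph N \<Sigma> Hi))
                 (prior Lo * (winA \<mu> Ph N \<Sigma>' Lo - winA \<mu> Ph N \<Sigma> Lo))"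
  by (simp add: exp_util_def winR_eq util_gain_def algebra_simps)

lemma util_gain_le:
  assumes "\<forall>w a. u w a \<le> B" "\<bar>x\<bar> \<le> X" "\<bar>y\<bar> \<le> Y"
  shows "util_gain u x y \<le> real B * (X + Y)"
proof -
  have coeff: "\<bar>real (u w Acc) - real (u w Rej)\<bar> \<le> real B" for w
    using assms(1)[rule_format, of w Acc] assms(1)[rule_format, of w Rej] by linarith
  have bound: "\<bar>real (u w Acc) - real (u w Rej)\<bar> * \<bar>z\<bar> \<le> real B * Z" if "\<bar>z\<bar> \<le> Z" for w z Z
    by (rule mult_mono[OF coeff that]) simp_all
  have "util_gain u x y
      \<le> \<bar>(real (u Hi Acc) - real (u Hi Rej)) * x\<bar> + \<bar>(real (u Lo Acc) - real (u Lo Rej)) * y\<bar>"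
    unfolding util_gain_def by (rule order_trans[OF abs_ge_self abs_triangle_ineq])
  also have "\<dots> = \<bar>real (u Hi Acc) - real (u Hi Rej)\<bar> * \<bar>x\<bar> + \<bar>real (u Lo Acc) - real (u Lo Rej)\<bar> * \<bar>y\<bar>"
    by (simp only: abs_mult)
  also have "\<dots> \<le> real B * X + real B * Y" by (intro add_mono bound assms(2,3))
  finally show ?thesis by (simp add: distrib_left)
qed

lemma util_gain_nonneg_contingent:
  assumes "contingent u" "\<forall>w a. u w a \<le> B" "0 \<le> util_gain u x y"
    and "x \<le> s" "-t \<le> y" "0 \<le> s" "0 \<le> t"
  shows "\<bar>x\<bar> \<le> s + B * t" "\<bar>y\<bar> \<le> t + B * s"
proof -
  define a where "a = real (u Hi Acc) - real (u Hi Rej)"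
  define b where "b = real (u Lo Acc) - real (u Lo Rej)"
  have a: "1 \<le> a" "a \<le> B" and b: "-B \<le> b" "b \<le> -1"
    using assms(1) assms(2)[rule_format, of Hi Acc] assms(2)[rule_format, of Lo Rej]
    by (auto simp: contingent_def a_def b_def)
  have gain: "0 \<le> a * x + b * y" using assms(3) by (simp add: util_gain_def a_def b_def)
  have "0 \<le> B * s" "0 \<le> B * t" using assms(6,7) by simp_all
  have "y \<le> B * s"
  proof (cases "0 < y")
    case True
    then have "y \<le> -b * y" using b mult_right_mono[of 1 "-b" y] by simp
    also have "\<dots> \<le> a * x" using gain by simp
    also have "\<dots> \<le> B * s"
      using a \<open>x \<le> s\<close> \<open>0 \<le> B * s\<close> mult_mono[of a B x s] mult_nonneg_nonpos[of a x]
      by (cases "0 \<le> x") auto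
    finally show ?thesis .
  qed (use \<open>0 \<le> B * s\<close> in simp)
  moreover have "-(B * t) \<le> x"
  proof (cases "x < 0")
    case True
    have "-(B * t) \<le> -b * y"
      using b \<open>-t \<le> y\<close> \<open>0 \<le> B * t\<close> mult_mono[of "-b" B "-y" t] mult_nonneg_nonneg[of "-b" y]
      by (cases "0 \<le> y") auto
    also have "\<dots> \<le> a * x" using gain by simp
    also have "\<dots> \<le> x" using a True mult_right_mono_neg[of 1 a x] by simp
    finally show ?thesis .
  qed (use \<open>0 \<le> B * t\<close> in simp)
  ultimately show "\<bar>x\<bar> \<le> s + B * t" "\<bar>y\<bar> \<le> t + B * s"
    using assms(4-7) \<open>0 \<le> B * s\<close> \<open>0 \<le> B * t\<close> by (simp_all only: abs_le_iff) linarith+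
qed

lemma util_gain_nonneg_friendly_unfriendly:
  assumes "friendly uf" "unfriendly uu" "0 \<le> util_gain uf x y" "0 \<le> util_gain uu x y"
  shows "y \<le> 0" "0 \<le> x"
proof -
  define af where "af = real (uf Hi Acc) - real (uf Hi Rej)"
  define bf where "bf = real (uf Lo Acc) - real (uf Lo Rej)"
  define au where "au = real (uu Hi Acc) - real (uu Hi Rej)"
  define bu where "bu = real (uu Lo Acc) - real (uu Lo Rej)"
  have f: "0 < bf" "bf < af" and u: "bu < au" "au < 0"
    using assms(1,2) by (auto simp: friendly_def unfriendly_def af_def bf_def au_def bu_def)
  have gains: "0 \<le> af * x + bf * y" "0 \<le> au * x + bu * y"
    using assms(3,4) by (simp_all add: util_gain_def af_def bf_def au_def bu_def)
  show "y \<le> 0"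
  proof (rule ccontr)
    assume "\<not> y \<le> 0"
    then have "bu * y < au * y" using u(1) by (simp add: mult_strict_right_mono)
    then have "au * (- y) < au * x" using gains(2) by simp
    then have "x < - y" using u(2) mult_less_cancel_left_neg[of au "- y" x] by simp
    then have "af * x + bf * y < (bf - af) * y" using f mult_strict_left_mono[of x "- y" af]
      by (simp add: algebra_simps)
    also have "\<dots> < 0" using f \<open>\<not> y \<le> 0\<close> by (simp add: mult_neg_pos)
    finally show False using gains(1) by simp
  qed
  then have "0 \<le> af * x" using gains(1) f mult_nonneg_nonpos[of bf y] by linarith
  then show "0 \<le> x" using f by (simp add: zero_le_mult_iff)
qed

lemma util_gain_nonpos_friendly: "friendly u \<Longrightarrow> x \<le> 0 \<Longrightarrow> y \<le> 0 \<Longrightarrow> util_gain u x y \<le> 0"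
  unfolding util_gain_def friendly_def by (intro add_nonpos_nonpos mult_nonneg_nonpos) auto

lemma util_gain_nonpos_unfriendly: "unfriendly u \<Longrightarrow> 0 \<le> x \<Longrightarrow> 0 \<le> y \<Longrightarrow> util_gain u x y \<le> 0"
  unfolding util_gain_def unfriendly_def by (intro add_nonpos_nonpos mult_nonpos_nonneg) auto

text \<open>If the deviators include a contingent agent, its incentive to deviate bounds both changes
  of the winning probabilities; otherwise they consist of friendly or unfriendly agents only, whose
  deviations move both probabilities in one direction, or of both kinds, whose joint incentives
  force the deviation towards the informed majority decision.\<close>

lemma coalition_gain_le:
  fixes v :: "nat \<Rightarrow> wstate \<Rightarrow> outcome \<Rightarrow> nat"
  assumes types: "\<forall>n\<in>D. friendly (v n) \<or> unfriendly (v n) \<or> contingent (v n)"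
    and bound: "\<forall>n w a. v n w a \<le> B"
    and gains: "\<forall>n\<in>D. 0 \<le> util_gain (v n) x y"
    and "x \<le> s" "-t \<le> y" "0 \<le> s" "0 \<le> t"
    and all_friendly: "\<forall>n\<in>D. friendly (v n) \<Longrightarrow> x \<le> 0 \<and> y \<le> 0"
    and all_unfriendly: "\<forall>n\<in>D. unfriendly (v n) \<Longrightarrow> 0 \<le> x \<and> 0 \<le> y"
    and "n \<in> D"
  shows "util_gain (v n) x y \<le> (real B + real B^2) * (s + t)"
proof -
  have bound_n: "\<forall>w a. v n w a \<le> B" using bound by blast
  have "0 \<le> real B * (s + t)" "real B * (s + t) \<le> (real B + real B^2) * (s + t)"
    using \<open>0 \<le> s\<close> \<open>0 \<le> t\<close> by (simp_all add: distrib_right)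
  consider (contingent) c where "c \<in> D" "contingent (v c)"
    | (friendly) "\<forall>m\<in>D. friendly (v m)" | (unfriendly) "\<forall>m\<in>D. unfriendly (v m)"
    | (mixed) f u where "f \<in> D" "friendly (v f)" "u \<in> D" "unfriendly (v u)"
    using types by blast
  then show ?thesis
  proof cases
    case contingent
    then have "\<bar>x\<bar> \<le> s + B * t" "\<bar>y\<bar> \<le> t + B * s"
      using util_gain_nonneg_contingent[of "v c" B x y s t] bound gains assms(4-7) by auto
    then have "util_gain (v n) x y \<le> real B * ((s + B * t) + (t + B * s))"
      by (rule util_gain_le[OF bound_n])
    then show ?thesis by (simp add: power2_eq_square algebra_simps)
  next
    case friendly
    then have "util_gain (v n) x y \<le> 0" using all_friendly \<open>n \<in> D\<close> by (simp add: util_gain_nonpos_friendly)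
    then show ?thesis using \<open>0 \<le> real B * (s + t)\<close> \<open>real B * (s + t) \<le> _\<close> by linarith
  next
    case unfriendly
    then have "util_gain (v n) x y \<le> 0" using all_unfriendly \<open>n \<in> D\<close> by (simp add: util_gain_nonpos_unfriendly)
    then show ?thesis using \<open>0 \<le> real B * (s + t)\<close> \<open>real B * (s + t) \<le> _\<close> by linarith
  next
    case mixed
    then have "y \<le> 0" "0 \<le> x" using util_gain_nonneg_friendly_unfriendly gains by metis+
    then have "\<bar>x\<bar> \<le> s" "\<bar>y\<bar> \<le> t" using assms(4,5) by auto
    then have "util_gain (v n) x y \<le> real B * (s + t)" by (rule util_gain_le[OF bound_n])
    then show ?thesis using \<open>real B * (s + t) \<le> _\<close> by linarith
  qed
qed

lemma winA_le_of_friendly_deviation: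
  fixes v :: "nat \<Rightarrow> wstate \<Rightarrow> outcome \<Rightarrow> nat"
  assumes "regular N v \<Sigma>" "\<forall>n<N. valid_strategy (\<Sigma>' n)" "0 \<le> Ph w" "Ph w \<le> 1"
    and "\<forall>n<N. \<Sigma>' n \<noteq> \<Sigma> n \<longrightarrow> friendly (v n)"
  shows "winA \<mu> Ph N \<Sigma>' w \<le> winA \<mu> Ph N \<Sigma> w"
proof (intro winA_mono allI impI)
  fix n assume "n < N"
  then have "\<Sigma>' n = \<Sigma> n \<or> \<Sigma> n = (1, 1)"
    and "0 \<le> voteA_prob Ph w (\<Sigma>' n) \<and> voteA_prob Ph w (\<Sigma>' n) \<le> 1"
    using assms voteA_prob_bounds by (auto simp: regular_def)
  then show "0 \<le> voteA_prob Ph w (\<Sigma>' n) \<and> voteA_prob Ph w (\<Sigma>' n) \<le> voteA_prob Ph w (\<Sigma> n)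
      \<and> voteA_prob Ph w (\<Sigma> n) \<le> 1"
    by (auto simp: voteA_prob_def)
qed

lemma winA_ge_of_unfriendly_deviation:
  fixes v :: "nat \<Rightarrow> wstate \<Rightarrow> outcome \<Rightarrow> nat"
  assumes "regular N v \<Sigma>" "\<forall>n<N. valid_strategy (\<Sigma>' n)" "0 \<le> Ph w" "Ph w \<le> 1"
    and "\<forall>n<N. \<Sigma>' n \<noteq> \<Sigma> n \<longrightarrow> unfriendly (v n)"
  shows "winA \<mu> Ph N \<Sigma> w \<le> winA \<mu> Ph N \<Sigma>' w"
proof (intro winA_mono allI impI)
  fix n assume "n < N"
  then have "\<Sigma>' n = \<Sigma> n \<or> \<Sigma> n = (0, 0)"
    and "0 \<le> voteA_prob Ph w (\<Sigma>' n) \<and> voteA_prob Ph w (\<Sigma>' n) \<le> 1"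
    using assms voteA_prob_bounds by (auto simp: regular_def)
  then show "0 \<le> voteA_prob Ph w (\<Sigma> n) \<and> voteA_prob Ph w (\<Sigma> n) \<le> voteA_prob Ph w (\<Sigma>' n)
      \<and> voteA_prob Ph w (\<Sigma>' n) \<le> 1"
    by (auto simp: voteA_prob_def)
qed

lemma regular_strong_BNE:
  fixes v :: "nat \<Rightarrow> wstate \<Rightarrow> outcome \<Rightarrow> nat"
  assumes prior: "0 \<le> prior Lo" "0 \<le> prior Hi"
    and signal: "\<forall>w. 0 \<le> Ph w \<and> Ph w \<le> 1"
    and bound: "\<forall>n w a. v n w a \<le> B"
    and types: "\<forall>n<N. friendly (v n) \<or> unfriendly (v n) \<or> contingent (v n)"
    and reg: "regular N v \<Sigma>"
  shows "strong_BNE prior Ph \<mu> N v \<Sigma>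
    ((real B + real B^2) * (prior Hi * error_prob \<mu> Ph N \<Sigma> Hi + prior Lo * error_prob \<mu> Ph N \<Sigma> Lo))"
  unfolding strong_BNE_def
proof (intro notI, elim exE conjE bexE)
  fix D \<Sigma>' n
  assume D: "D \<subseteq> {..<N}" and valid': "\<forall>n<N. valid_strategy (\<Sigma>' n)"
    and others: "\<forall>n<N. n \<notin> D \<longrightarrow> \<Sigma>' n = \<Sigma> n"
    and weak: "\<forall>n\<in>D. exp_util prior Ph \<mu> N \<Sigma> (v n) \<le> exp_util prior Ph \<mu> N \<Sigma>' (v n)"
    and "n \<in> D"
    and strict: "exp_util prior Ph \<mu> N \<Sigma> (v n) + (real B + real B^2) *
      (prior Hi * error_prob \<mu> Ph N \<Sigma> Hi + prior Lo * error_prob \<mu> Ph N \<Sigma> Lo) < exp_util prior Ph \<mu> N \<Sigma>' (v n)"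
  define x where "x = prior Hi * (winA \<mu> Ph N \<Sigma>' Hi - winA \<mu> Ph N \<Sigma> Hi)"
  define y where "y = prior Lo * (winA \<mu> Ph N \<Sigma>' Lo - winA \<mu> Ph N \<Sigma> Lo)"
  have gain: "exp_util prior Ph \<mu> N \<Sigma>' (v m) - exp_util prior Ph \<mu> N \<Sigma> (v m) = util_gain (v m) x y" for m
    by (simp add: exp_util_diff x_def y_def)
  have "0 \<le> winA \<mu> Ph N \<Sigma> w \<and> winA \<mu> Ph N \<Sigma> w \<le> 1"
    "0 \<le> winA \<mu> Ph N \<Sigma>' w \<and> winA \<mu> Ph N \<Sigma>' w \<le> 1" for w
    using winA_bounds reg[unfolded regular_def] valid' signal by auto
  then have "x \<le> prior Hi * error_prob \<mu> Ph N \<Sigma> Hi" "- (prior Lo * error_prob \<mu> Ph N \<Sigma> Lo) \<le> y"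
    "0 \<le> prior Hi * error_prob \<mu> Ph N \<Sigma> Hi" "0 \<le> prior Lo * error_prob \<mu> Ph N \<Sigma> Lo"
    using prior by (auto simp: x_def y_def mult_left_mono mult_left_le right_diff_distrib)
  moreover have "x \<le> 0 \<and> y \<le> 0" if "\<forall>n\<in>D. friendly (v n)"
  proof -
    have "\<forall>n<N. \<Sigma>' n \<noteq> \<Sigma> n \<longrightarrow> friendly (v n)" using that others by blast
    then have "winA \<mu> Ph N \<Sigma>' w \<le> winA \<mu> Ph N \<Sigma> w" for w
      using signal winA_le_of_friendly_deviation[OF reg valid'] by blast
    then show ?thesis using prior by (simp add: x_def y_def mult_nonneg_nonpos)
  qed
  moreover have "0 \<le> x \<and> 0 \<le> y" if "\<forall>n\<in>D. unfriendly (v n)"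
  proof -
    have "\<forall>n<N. \<Sigma>' n \<noteq> \<Sigma> n \<longrightarrow> unfriendly (v n)" using that others by blast
    then have "winA \<mu> Ph N \<Sigma> w \<le> winA \<mu> Ph N \<Sigma>' w" for w
      using signal winA_ge_of_unfriendly_deviation[OF reg valid'] by blast
    then show ?thesis using prior by (simp add: x_def y_def)
  qed
  moreover have "\<forall>n\<in>D. 0 \<le> util_gain (v n) x y" using weak gain by (metis diff_ge_0_iff_ge)
  ultimately have "util_gain (v n) x y
      \<le> (real B + real B^2) * (prior Hi * error_prob \<mu> Ph N \<Sigma> Hi + prior Lo * error_prob \<mu> Ph N \<Sigma> Lo)"
    using types D \<open>n \<in> D\<close> by (intro coalition_gain_le[OF _ bound]) auto
  then show False using strict gain[of n] by linarith
qed

section \<open>Deviations of the contingent agents\<close>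

lemma exists_separating_strategy:
  assumes "0 \<le> Ph Lo" "Ph Lo < Ph Hi" "Ph Hi \<le> 1" "0 < \<tau>" "\<tau> < 1"
  obtains \<sigma> where "valid_strategy \<sigma>" "voteA_prob Ph Lo \<sigma> < \<tau>" "\<tau> < voteA_prob Ph Hi \<sigma>"
proof (cases "\<tau> < (Ph Lo + Ph Hi) / 2")
  case True
  define \<beta> where "\<beta> = 2 * \<tau> / (Ph Lo + Ph Hi)"
  have "valid_strategy (0, \<beta>)" "voteA_prob Ph Lo (0, \<beta>) < \<tau>" "\<tau> < voteA_prob Ph Hi (0, \<beta>)"
    using assms True by (auto simp: \<beta>_def valid_strategy_def voteA_prob_def field_simps)
  then show ?thesis by (rule that)
next
  case False
  define \<gamma> where "\<gamma> = 2 * (1 - \<tau>) / (2 - Ph Lo - Ph Hi)"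
  have "0 < (1 - \<tau>) * (Ph Hi - Ph Lo)" using assms by simp
  then have "valid_strategy (1 - \<gamma>, 1)" "voteA_prob Ph Lo (1 - \<gamma>, 1) < \<tau>" "\<tau> < voteA_prob Ph Hi (1 - \<gamma>, 1)"
    using assms False by (auto simp: \<gamma>_def valid_strategy_def voteA_prob_def field_simps)
  then show ?thesis by (rule that)
qed

lemma contingent_gain_ge:
  assumes "contingent u" "\<forall>w a. u w a \<le> B" "0 \<le> \<kappa>" "-\<kappa> \<le> x" "y \<le> \<kappa>"
    and "0 \<le> d" "d \<le> x \<or> d \<le> -y"
  shows "d - real B * \<kappa> \<le> util_gain u x y"
proof -
  have scaled: "-(real B * \<kappa>) \<le> c * z" "0 \<le> z \<Longrightarrow> z \<le> c * z"
    if "1 \<le> c" "c \<le> real B" "-\<kappa> \<le> z" for c z :: real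
  proof -
    show "0 \<le> z \<Longrightarrow> z \<le> c * z" using that mult_right_mono[of 1 c z] by simp
    show "-(real B * \<kappa>) \<le> c * z"
    proof (cases "0 \<le> z")
      case False
      then have "real B * z \<le> c * z" using that by (intro mult_right_mono_neg) auto
      moreover have "-(real B * \<kappa>) \<le> real B * z" using mult_left_mono[OF that(3), of "real B"] by simp
      ultimately show ?thesis by linarith
    next
      case True
      then have "0 \<le> c * z" using that by simp
      moreover have "0 \<le> real B * \<kappa>" using \<open>0 \<le> \<kappa>\<close> by simp
      ultimately show ?thesis by linarith
    qed
  qed
  define a where "a = real (u Hi Acc) - real (u Hi Rej)"
  define b where "b = real (u Lo Rej) - real (u Lo Acc)"
  have ab: "1 \<le> a" "a \<le> B" "1 \<le> b" "b \<le> B"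
    using assms(1) assms(2)[rule_format, of Hi Acc] assms(2)[rule_format, of Lo Rej]
    by (auto simp: contingent_def a_def b_def)
  have "util_gain u x y = a * x + b * (-y)" by (simp add: util_gain_def a_def b_def algebra_simps)
  moreover have "-\<kappa> \<le> -y" using assms(5) by simp
  ultimately show ?thesis
    using assms(4,6,7) scaled[OF ab(1,2) assms(4)] scaled[OF ab(3,4), of "-y"] by force
qed

lemma agent_types_disjoint: "friendly u \<Longrightarrow> \<not> unfriendly u" "friendly u \<Longrightarrow> \<not> contingent u"
  "unfriendly u \<Longrightarrow> \<not> contingent u"
  by (auto simp: friendly_def unfriendly_def contingent_def)

definition contingent_deviation ::
    "(nat \<Rightarrow> wstate \<Rightarrow> outcome \<Rightarrow> nat) \<Rightarrow> strategy \<Rightarrow> (nat \<Rightarrow> strategy) \<Rightarrow> nat \<Rightarrow> strategy" where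
  "contingent_deviation v \<sigma> \<Sigma> n = (if contingent (v n) then \<sigma> else \<Sigma> n)"

lemma bern_mean_contingent_deviation:
  fixes v :: "nat \<Rightarrow> wstate \<Rightarrow> outcome \<Rightarrow> nat"
  assumes reg: "regular N v \<Sigma>" and types: "\<forall>n<N. friendly (v n) \<or> unfriendly (v n) \<or> contingent (v n)"
  shows "bern_mean (vote_probs Ph w (contingent_deviation v \<sigma> \<Sigma>)) {..<N} =
     real (card {n. n < N \<and> friendly (v n)}) + voteA_prob Ph w \<sigma> * real (card {n. n < N \<and> contingent (v n)})"
proof -
  have "voteA_prob Ph w (contingent_deviation v \<sigma> \<Sigma> n)
      = of_bool (friendly (v n)) + voteA_prob Ph w \<sigma> * of_bool (contingent (v n))" if "n < N" for n
    using reg types that agent_types_disjoint[of "v n"]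
    by (auto simp: contingent_deviation_def regular_def voteA_prob_def)
  then have "bern_mean (vote_probs Ph w (contingent_deviation v \<sigma> \<Sigma>)) {..<N}
      = (\<Sum>n<N. of_bool (friendly (v n)) + voteA_prob Ph w \<sigma> * of_bool (contingent (v n)))"
    unfolding bern_mean_def by (intro sum.cong) auto
  also have "\<dots> = real (card {n. n < N \<and> friendly (v n)})
      + voteA_prob Ph w \<sigma> * real (card {n. n < N \<and> contingent (v n)})"
    by (simp add: sum.distrib flip: sum_distrib_left) (simp add: Collect_conj_eq lessThan_def Int_commute)
  finally show ?thesis .
qed

text \<open>The error bound required of the new profile is so small that the loss it can cause, at most
  \<open>B\<close> times the bound, is dominated by the gain \<open>\<pi> \<eta>\<close> (\<open>\<pi>\<close> the smaller prior) from correcting the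
  error of the old profile.\<close>

lemma contingent_gain_of_correction:
  assumes prior: "0 < prior Lo" "0 < prior Hi" "prior Lo + prior Hi = 1"
    and signal: "\<forall>w. 0 \<le> Ph w \<and> Ph w \<le> 1"
    and "contingent u" "\<forall>w a. u w a \<le> B"
    and valid: "\<forall>n<N. valid_strategy (\<Sigma> n)" "\<forall>n<N. valid_strategy (\<Sigma>' n)"
    and "0 < \<eta>" and fails: "\<eta> \<le> error_prob \<mu> Ph N \<Sigma> w"
    and corrects: "\<forall>w. error_prob \<mu> Ph N \<Sigma>' w \<le> min (prior Hi) (prior Lo) * \<eta> / (4 * (real B + 1))"
  shows "min (prior Hi) (prior Lo) * \<eta> / 2 < util_gain u
    (prior Hi * (winA \<mu> Ph N \<Sigma>' Hi - winA \<mu> Ph N \<Sigma> Hi)) (prior Lo * (winA \<mu> Ph N \<Sigma>' Lo - winA \<mu> Ph N \<Sigma> Lo))"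
proof -
  define \<pi> where "\<pi> = min (prior Hi) (prior Lo)"
  define \<kappa> where "\<kappa> = \<pi> * \<eta> / (4 * (real B + 1))"
  define x where "x = prior Hi * (winA \<mu> Ph N \<Sigma>' Hi - winA \<mu> Ph N \<Sigma> Hi)"
  define y where "y = prior Lo * (winA \<mu> Ph N \<Sigma>' Lo - winA \<mu> Ph N \<Sigma> Lo)"
  have \<pi>: "0 < \<pi>" "\<pi> \<le> prior Hi" "\<pi> \<le> prior Lo" "prior Hi \<le> 1" "prior Lo \<le> 1"
    using prior by (auto simp: \<pi>_def)
  have \<kappa>: "0 \<le> \<kappa>" "(\<pi> + real B) * \<kappa> \<le> \<pi> * \<eta> / 4"
    using \<pi> \<open>0 < \<eta>\<close> mult_right_mono[of \<pi> 1 \<kappa>] by (auto simp: \<kappa>_def field_simps)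
  then have "\<pi> * \<kappa> + real B * \<kappa> \<le> \<pi> * (\<eta> / 4)" "0 \<le> real B * \<kappa>" by (simp_all add: distrib_right)
  then have "\<pi> * \<kappa> \<le> \<pi> * (\<eta> / 4)" by linarith
  then have "\<kappa> \<le> \<eta>" using \<pi>(1) \<open>0 < \<eta>\<close> by simp
  have bounds: "0 \<le> winA \<mu> Ph N \<Sigma> w \<and> winA \<mu> Ph N \<Sigma> w \<le> 1"
    "0 \<le> winA \<mu> Ph N \<Sigma>' w \<and> winA \<mu> Ph N \<Sigma>' w \<le> 1" for w
    using winA_bounds[OF valid(1)] winA_bounds[OF valid(2)] signal by auto
  have corr: "1 - winA \<mu> Ph N \<Sigma>' Hi \<le> \<kappa>" "winA \<mu> Ph N \<Sigma>' Lo \<le> \<kappa>"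
    using corrects[rule_format, of Hi] corrects[rule_format, of Lo] by (simp_all add: \<kappa>_def \<pi>_def)
  have dH: "-\<kappa> \<le> winA \<mu> Ph N \<Sigma>' Hi - winA \<mu> Ph N \<Sigma> Hi"
    and dL: "winA \<mu> Ph N \<Sigma>' Lo - winA \<mu> Ph N \<Sigma> Lo \<le> \<kappa>"
    using corr bounds[of Hi] bounds[of Lo] by linarith+
  have "prior Hi * (-\<kappa>) \<le> x" unfolding x_def by (rule mult_left_mono[OF dH]) (use \<pi> in linarith)
  moreover have "y \<le> prior Lo * \<kappa>" unfolding y_def by (rule mult_left_mono[OF dL]) (use \<pi> in linarith)
  moreover have "prior Hi * \<kappa> \<le> \<kappa>" "prior Lo * \<kappa> \<le> \<kappa>"
    using \<pi> \<kappa>(1) by (auto intro: mult_left_le_one_le)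
  ultimately have xy: "-\<kappa> \<le> x" "y \<le> \<kappa>" by linarith+
  have "\<pi> * (\<eta> - \<kappa>) \<le> x \<or> \<pi> * (\<eta> - \<kappa>) \<le> -y"
  proof (cases w)
    case Hi
    then have "\<eta> - \<kappa> \<le> winA \<mu> Ph N \<Sigma>' Hi - winA \<mu> Ph N \<Sigma> Hi" using fails corr by simp
    then have "\<pi> * (\<eta> - \<kappa>) \<le> x"
      using \<pi> \<open>\<kappa> \<le> \<eta>\<close> mult_mono[of \<pi> "prior Hi" "\<eta> - \<kappa>"] by (simp add: x_def)
    then show ?thesis ..
  next
    case Lo
    then have "\<eta> - \<kappa> \<le> winA \<mu> Ph N \<Sigma> Lo - winA \<mu> Ph N \<Sigma>' Lo" using fails corr by simp
    then have "\<pi> * (\<eta> - \<kappa>) \<le> prior Lo * (winA \<mu> Ph N \<Sigma> Lo - winA \<mu> Ph N \<Sigma>' Lo)"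
      using \<pi> \<open>\<kappa> \<le> \<eta>\<close> by (intro mult_mono) auto
    then have "\<pi> * (\<eta> - \<kappa>) \<le> -y" by (simp add: y_def right_diff_distrib)
    then show ?thesis ..
  qed
  then have "\<pi> * (\<eta> - \<kappa>) - real B * \<kappa> \<le> util_gain u x y"
    using \<pi>(1) \<open>\<kappa> \<le> \<eta>\<close> by (intro contingent_gain_ge[OF assms(5,6) \<kappa>(1) xy]) auto
  moreover have "\<pi> * \<eta> / 2 < \<pi> * (\<eta> - \<kappa>) - real B * \<kappa>"
    using \<kappa>(2) mult_pos_pos[OF \<pi>(1) \<open>0 < \<eta>\<close>] by (simp add: algebra_simps)
  ultimately show ?thesis by (simp add: \<pi>_def x_def y_def)
qed

lemma not_strong_BNE_of_contingent_deviation: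
  fixes v :: "nat \<Rightarrow> wstate \<Rightarrow> outcome \<Rightarrow> nat"
  assumes prior: "0 < prior Lo" "0 < prior Hi" "prior Lo + prior Hi = 1"
    and signal: "\<forall>w. 0 \<le> Ph w \<and> Ph w \<le> 1" and bound: "\<forall>n w a. v n w a \<le> B"
    and valid: "\<forall>n<N. valid_strategy (\<Sigma> n)" and "valid_strategy \<sigma>"
    and "\<exists>n<N. contingent (v n)"
    and "0 < \<eta>" and fails: "\<eta> \<le> error_prob \<mu> Ph N \<Sigma> w"
    and corrects: "\<forall>w. error_prob \<mu> Ph N (contingent_deviation v \<sigma> \<Sigma>) w
                        \<le> min (prior Hi) (prior Lo) * \<eta> / (4 * (real B + 1))"
  shows "\<not> strong_BNE prior Ph \<mu> N v \<Sigma> (min (prior Hi) (prior Lo) * \<eta> / 2)"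
proof -
  define \<Sigma>' where "\<Sigma>' = contingent_deviation v \<sigma> \<Sigma>"
  have valid': "\<forall>n<N. valid_strategy (\<Sigma>' n)"
    using valid \<open>valid_strategy \<sigma>\<close> by (simp add: \<Sigma>'_def contingent_deviation_def)
  have gain: "exp_util prior Ph \<mu> N \<Sigma> (v n) + min (prior Hi) (prior Lo) * \<eta> / 2
      < exp_util prior Ph \<mu> N \<Sigma>' (v n)" if "contingent (v n)" for n
  proof -
    have "\<forall>w a. v n w a \<le> B" using bound by blast
    from contingent_gain_of_correction[OF prior signal that this valid valid' \<open>0 < \<eta>\<close> fails] corrects
    have "min (prior Hi) (prior Lo) * \<eta> / 2 < util_gain (v n)
      (prior Hi * (winA \<mu> Ph N \<Sigma>' Hi - winA \<mu> Ph N \<Sigma> Hi)) (prior Lo * (winA \<mu> Ph N \<Sigma>' Lo - winA \<mu> Ph N \<Sigma> Lo))"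
      by (simp add: \<Sigma>'_def)
    then show ?thesis using exp_util_diff[of prior Ph \<mu> N \<Sigma>' "v n" \<Sigma>] by linarith
  qed
  have "0 < min (prior Hi) (prior Lo) * \<eta> / 2" using prior \<open>0 < \<eta>\<close> by simp
  then have weak: "exp_util prior Ph \<mu> N \<Sigma> (v n) \<le> exp_util prior Ph \<mu> N \<Sigma>' (v n)"
    if "contingent (v n)" for n
    using gain[OF that] by linarith
  show ?thesis
    unfolding strong_BNE_def not_not
    using valid' gain weak \<open>\<exists>n<N. contingent (v n)\<close>
    by (intro exI[of _ "{n. n < N \<and> contingent (v n)}"] exI[of _ \<Sigma>'])
      (auto simp: \<Sigma>'_def contingent_deviation_def)
qed

section \<open>Sequences of instances\<close>

lemma card_types_partition:
  fixes v :: "nat \<Rightarrow> wstate \<Rightarrow> outcome \<Rightarrow> nat"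
  assumes "\<forall>n<N. friendly (v n) \<or> unfriendly (v n) \<or> contingent (v n)"
  shows "card {n. n < N \<and> friendly (v n)} + card {n. n < N \<and> unfriendly (v n)}
         + card {n. n < N \<and> contingent (v n)} = N"
proof -
  have "{..<N} = ({n. n < N \<and> friendly (v n)} \<union> {n. n < N \<and> unfriendly (v n)}) \<union> {n. n < N \<and> contingent (v n)}"
    using assms by auto
  then have "N = card (({n. n < N \<and> friendly (v n)} \<union> {n. n < N \<and> unfriendly (v n)}) \<union> {n. n < N \<and> contingent (v n)})"
    by (metis card_lessThan)
  also have "\<dots> = card {n. n < N \<and> friendly (v n)} + card {n. n < N \<and> unfriendly (v n)}
      + card {n. n < N \<and> contingent (v n)}"
    by (subst card_Un_disjoint card_Un_disjoint; auto dest: agent_types_disjoint)+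
  finally show ?thesis by simp
qed

lemma nat_floor_bounds: "0 \<le> x \<Longrightarrow> x - 1 \<le> real (nat \<lfloor>x\<rfloor>) \<and> real (nat \<lfloor>x\<rfloor>) \<le> x"
  by linarith

locale voting_sequence =
  fixes prior Ph :: "wstate \<Rightarrow> real" and \<mu> \<alpha>F \<alpha>U \<alpha>C :: real and B :: nat
    and v :: "nat \<Rightarrow> nat \<Rightarrow> wstate \<Rightarrow> outcome \<Rightarrow> nat"
    and \<Sigma> :: "nat \<Rightarrow> nat \<Rightarrow> strategy"
  assumes prior: "prior Lo > 0" "prior Hi > 0" "prior Lo + prior Hi = 1"
    and signal: "\<forall>w. 0 \<le> Ph w \<and> Ph w \<le> 1" "Ph Hi > Ph Lo"
    and mu: "0 < \<mu>" "\<mu> < 1"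
    and alpha: "\<alpha>F \<ge> 0" "\<alpha>U \<ge> 0" "\<alpha>C \<ge> 0" "\<alpha>F + \<alpha>U + \<alpha>C = 1"
      "\<alpha>F < \<mu>" "\<alpha>U < 1 - \<mu>"
    and util_bound: "\<forall>N n w x. v N n w x \<le> B"
    and types: "\<forall>N n. n < N \<longrightarrow> friendly (v N n) \<or> unfriendly (v N n) \<or> contingent (v N n)"
    and countF: "\<forall>N. card {n. n < N \<and> friendly (v N n)} = nat \<lfloor>\<alpha>F * real N\<rfloor>"
    and countU: "\<forall>N. card {n. n < N \<and> unfriendly (v N n)} = nat \<lfloor>\<alpha>U * real N\<rfloor>"
    and reg: "\<forall>N\<ge>1. regular N (v N) (\<Sigma> N)"

begin

abbreviation scaled_excess :: "nat \<Rightarrow> real" where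
  "scaled_excess N \<equiv> sqrt (real N) * excess Ph \<mu> N (\<Sigma> N)"

lemma valid_strategies: "1 \<le> N \<Longrightarrow> \<forall>n<N. valid_strategy (\<Sigma> N n)"
  using reg by (simp add: regular_def)

lemma type_counts:
  fixes N :: nat
  defines "F \<equiv> real (card {n. n < N \<and> friendly (v N n)})"
    and "U \<equiv> real (card {n. n < N \<and> unfriendly (v N n)})"
    and "C \<equiv> real (card {n. n < N \<and> contingent (v N n)})"
  shows "\<alpha>F * real N - 1 \<le> F" "F \<le> \<alpha>F * real N" "\<alpha>U * real N - 1 \<le> U" "U \<le> \<alpha>U * real N"
    and "C = real N - F - U"
proof -
  show "\<alpha>F * real N - 1 \<le> F" "F \<le> \<alpha>F * real N" "\<alpha>U * real N - 1 \<le> U" "U \<le> \<alpha>U * real N"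
    using nat_floor_bounds[of "\<alpha>F * real N"] nat_floor_bounds[of "\<alpha>U * real N"] alpha countF countU
    by (simp_all add: F_def U_def)
  show "C = real N - F - U"
    using card_types_partition[of N "v N"] types unfolding F_def U_def C_def by (simp flip: of_nat_add)
qed

lemma exists_contingent:
  assumes "1 \<le> N"
  shows "\<exists>n<N. contingent (v N n)"
proof -
  have "0 < \<alpha>C * real N" using alpha mu assms by simp
  also have "\<dots> = real N - \<alpha>F * real N - \<alpha>U * real N"
    using alpha(4) by (simp add: algebra_simps flip: eq_diff_eq)
  also have "\<dots> \<le> real (card {n. n < N \<and> contingent (v N n)})"
    using type_counts[of N] by linarith
  finally show ?thesis by (metis (mono_tags, lifting) card.empty empty_Collect_eq of_nat_0 order_less_irrefl)
qed

lemma excess_contingent_deviation_ge: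
  assumes "1 \<le> N" "valid_strategy \<sigma>"
  shows "min (\<alpha>F + \<alpha>C * voteA_prob Ph Hi \<sigma> - \<mu>) (\<mu> - \<alpha>F - \<alpha>C * voteA_prob Ph Lo \<sigma>) - 1 / real N
    \<le> excess Ph \<mu> N (contingent_deviation (v N) \<sigma> (\<Sigma> N))"
proof -
  define F where "F = real (card {n. n < N \<and> friendly (v N n)})"
  define U where "U = real (card {n. n < N \<and> unfriendly (v N n)})"
  define g where "g w = voteA_prob Ph w \<sigma>" for w
  define \<delta> where "\<delta> = min (\<alpha>F + \<alpha>C * g Hi - \<mu>) (\<mu> - \<alpha>F - \<alpha>C * g Lo)"
  have g: "0 \<le> g w" "g w \<le> 1" for w using voteA_prob_bounds[OF assms(2)] signal by (auto simp: g_def)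
  have counts: "\<alpha>F * real N - 1 \<le> F" "F \<le> \<alpha>F * real N" "\<alpha>U * real N - 1 \<le> U" "U \<le> \<alpha>U * real N"
    using type_counts[of N] by (simp_all add: F_def U_def)
  have mean: "bern_mean (vote_probs Ph w (contingent_deviation (v N) \<sigma> (\<Sigma> N))) {..<N}
      = F * (1 - g w) + g w * (real N - U)" for w
    using bern_mean_contingent_deviation[of N "v N" "\<Sigma> N" Ph w \<sigma>] reg types type_counts(5)[of N] assms(1)
    by (simp add: F_def U_def g_def algebra_simps)
  have \<alpha>C: "\<alpha>C = 1 - \<alpha>F - \<alpha>U" using alpha(4) by simp
  have "real N * \<delta> \<le> real N * (\<alpha>F + \<alpha>C * g Hi - \<mu>)" "real N * \<delta> \<le> real N * (\<mu> - \<alpha>F - \<alpha>C * g Lo)"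
    by (simp_all add: \<delta>_def mult_left_mono)
  moreover have "real N * (\<alpha>F + \<alpha>C * g Hi) - 1 \<le> (\<alpha>F * real N - 1) * (1 - g Hi) + g Hi * (real N - \<alpha>U * real N)"
    "\<alpha>F * real N * (1 - g Lo) + g Lo * (real N - (\<alpha>U * real N - 1)) \<le> real N * (\<alpha>F + \<alpha>C * g Lo) + 1"
    using g unfolding \<alpha>C by (simp_all add: algebra_simps)
  moreover have "(\<alpha>F * real N - 1) * (1 - g Hi) + g Hi * (real N - \<alpha>U * real N) \<le> F * (1 - g Hi) + g Hi * (real N - U)"
    "F * (1 - g Lo) + g Lo * (real N - U) \<le> \<alpha>F * real N * (1 - g Lo) + g Lo * (real N - (\<alpha>U * real N - 1))"
    using counts g by (intro add_mono mult_right_mono mult_left_mono; simp)+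
  ultimately have "real N * \<delta> - 1 \<le> bern_mean (vote_probs Ph Hi (contingent_deviation (v N) \<sigma> (\<Sigma> N))) {..<N} - \<mu> * real N"
    "real N * \<delta> - 1 \<le> \<mu> * real N - bern_mean (vote_probs Ph Lo (contingent_deviation (v N) \<sigma> (\<Sigma> N))) {..<N}"
    unfolding mean by (simp_all add: algebra_simps)
  then show ?thesis using assms(1) unfolding \<delta>_def g_def by (intro excess_ge_of_margins) auto
qed

text \<open>Contingent agents supply an A-vote share \<open>\<tau> = (\<mu> - \<alpha>F) / \<alpha>C\<close> exactly when the total share
  is at the threshold; a strategy voting A with probability above \<open>\<tau>\<close> in state H and below it in
  state L gives the deviation a positive excess.\<close>

lemma exists_correcting_strategy:
  obtains \<sigma> \<delta> where "valid_strategy \<sigma>" "0 < \<delta>"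
    "\<And>N. 1 \<le> N \<Longrightarrow> \<delta> - 1 / real N \<le> excess Ph \<mu> N (contingent_deviation (v N) \<sigma> (\<Sigma> N))"
proof -
  have "0 < \<alpha>C" using alpha mu by linarith
  define \<tau> where "\<tau> = (\<mu> - \<alpha>F) / \<alpha>C"
  have "0 < \<tau>" "\<tau> < 1" using \<open>0 < \<alpha>C\<close> alpha by (auto simp: \<tau>_def field_simps)
  then obtain \<sigma> where \<sigma>: "valid_strategy \<sigma>" "voteA_prob Ph Lo \<sigma> < \<tau>" "\<tau> < voteA_prob Ph Hi \<sigma>"
    using exists_separating_strategy[of Ph \<tau>] signal by blast
  have "\<alpha>C * voteA_prob Ph Lo \<sigma> < \<alpha>C * \<tau>" "\<alpha>C * \<tau> < \<alpha>C * voteA_prob Ph Hi \<sigma>"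
    using \<sigma> \<open>0 < \<alpha>C\<close> by simp_all
  then have "0 < min (\<alpha>F + \<alpha>C * voteA_prob Ph Hi \<sigma> - \<mu>) (\<mu> - \<alpha>F - \<alpha>C * voteA_prob Ph Lo \<sigma>)"
    using \<open>0 < \<alpha>C\<close> by (simp add: \<tau>_def)
  then show ?thesis by (rule that[OF \<sigma>(1) _ excess_contingent_deviation_ge[OF _ \<sigma>(1)]])
qed

theorem infinitely_many_not_strong_BNE:
  assumes "0 < \<eta>" and fails: "infinite {N. 1 \<le> N \<and> (\<exists>w. \<eta> \<le> error_prob \<mu> Ph N (\<Sigma> N) w)}"
  shows "\<exists>\<epsilon>>0. infinite {N. N \<ge> 1 \<and> \<not> strong_BNE prior Ph \<mu> N (v N) (\<Sigma> N) \<epsilon>}"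
proof -
  obtain \<sigma> \<delta> where \<sigma>: "valid_strategy \<sigma>" and "0 < \<delta>"
    and excess: "\<And>N. 1 \<le> N \<Longrightarrow> \<delta> - 1 / real N \<le> excess Ph \<mu> N (contingent_deviation (v N) \<sigma> (\<Sigma> N))"
    by (rule exists_correcting_strategy) (rule that)
  define \<epsilon> where "\<epsilon> = min (prior Hi) (prior Lo) * \<eta> / 2"
  define \<kappa> where "\<kappa> = min (prior Hi) (prior Lo) * \<eta> / (4 * (real B + 1))"
  have "0 < \<kappa>" "0 < \<epsilon>" using prior \<open>0 < \<eta>\<close> by (simp_all add: \<kappa>_def \<epsilon>_def)
  define N0 where "N0 = nat \<lceil>2 / \<delta> + 1 / (\<kappa> * \<delta>^2)\<rceil> + 1"
  have "\<not> strong_BNE prior Ph \<mu> N (v N) (\<Sigma> N) \<epsilon>"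
    if N: "N0 \<le> N" and fail: "\<eta> \<le> error_prob \<mu> Ph N (\<Sigma> N) w" for N w
  proof -
    have "2 / \<delta> + 1 / (\<kappa> * \<delta>^2) \<le> real N" "1 \<le> N" using N unfolding N0_def by linarith+
    moreover have "0 \<le> 2 / \<delta>" "0 \<le> 1 / (\<kappa> * \<delta>^2)" using \<open>0 < \<delta>\<close> \<open>0 < \<kappa>\<close> by simp_all
    ultimately have "2 / \<delta> \<le> real N" "1 / (\<kappa> * \<delta>^2) \<le> real N" by linarith+
    then have "1 / real N \<le> \<delta> / 2" "1 / (real N * \<delta>^2) \<le> \<kappa>"
      using \<open>1 \<le> N\<close> \<open>0 < \<delta>\<close> \<open>0 < \<kappa>\<close> by (simp_all add: field_simps)
    then have "\<delta> / 2 \<le> excess Ph \<mu> N (contingent_deviation (v N) \<sigma> (\<Sigma> N))"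
      using excess[OF \<open>1 \<le> N\<close>] by linarith
    moreover have valid': "\<forall>n<N. valid_strategy (contingent_deviation (v N) \<sigma> (\<Sigma> N) n)"
      using valid_strategies[OF \<open>1 \<le> N\<close>] \<sigma> by (simp add: contingent_deviation_def)
    ultimately have "error_prob \<mu> Ph N (contingent_deviation (v N) \<sigma> (\<Sigma> N)) w' \<le> 1 / (real N * \<delta>^2)" for w'
      using error_prob_le[OF _ valid' _ _ half_gt_zero[OF \<open>0 < \<delta>\<close>]] signal \<open>1 \<le> N\<close>
      by (simp add: power_divide)
    then show ?thesis
      unfolding \<epsilon>_def
      using exists_contingent[OF \<open>1 \<le> N\<close>] valid_strategies[OF \<open>1 \<le> N\<close>] util_bound \<open>1 / (real N * \<delta>^2) \<le> \<kappa>\<close>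
      by (intro not_strong_BNE_of_contingent_deviation[OF prior signal(1) _ _ \<sigma> _ \<open>0 < \<eta>\<close> fail])
        (auto simp: \<kappa>_def intro: order_trans)
  qed
  then have "{N. 1 \<le> N \<and> (\<exists>w. \<eta> \<le> error_prob \<mu> Ph N (\<Sigma> N) w)} - {..<N0}
      \<subseteq> {N. N \<ge> 1 \<and> \<not> strong_BNE prior Ph \<mu> N (v N) (\<Sigma> N) \<epsilon>}"
    by auto
  moreover have "infinite ({N. 1 \<le> N \<and> (\<exists>w. \<eta> \<le> error_prob \<mu> Ph N (\<Sigma> N) w)} - {..<N0})"
    using fails by (simp add: Diff_infinite_finite)
  ultimately show ?thesis using \<open>0 < \<epsilon>\<close> infinite_super by blast
qed

theorem strong_BNE_if_liminf_infinite:
  assumes "liminf (\<lambda>N. ereal (scaled_excess N)) = \<infinity>"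
  shows "\<exists>\<epsilon> :: nat \<Rightarrow> real. \<epsilon> \<longlonglongrightarrow> 0 \<and> (\<forall>N\<ge>1. strong_BNE prior Ph \<mu> N (v N) (\<Sigma> N) (\<epsilon> N))"
proof (intro exI conjI allI impI)
  have "filterlim scaled_excess at_top sequentially"
    using assms by (simp flip: liminf_PInfty tendsto_PInfty_eq_at_top)
  then have "(\<lambda>N. error_prob \<mu> Ph N (\<Sigma> N) w) \<longlonglongrightarrow> 0" for w
    using signal(1) valid_strategies by (intro error_prob_tendsto_zero) auto
  then have "(\<lambda>N. (real B + real B^2) * (prior Hi * error_prob \<mu> Ph N (\<Sigma> N) Hi
      + prior Lo * error_prob \<mu> Ph N (\<Sigma> N) Lo)) \<longlonglongrightarrow> (real B + real B^2) * (prior Hi * 0 + prior Lo * 0)"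
    by (intro tendsto_intros)
  then show "(\<lambda>N. (real B + real B^2) * (prior Hi * error_prob \<mu> Ph N (\<Sigma> N) Hi
      + prior Lo * error_prob \<mu> Ph N (\<Sigma> N) Lo)) \<longlonglongrightarrow> 0"
    by simp
  show "strong_BNE prior Ph \<mu> N (v N) (\<Sigma> N) ((real B + real B^2) * (prior Hi * error_prob \<mu> Ph N (\<Sigma> N) Hi
      + prior Lo * error_prob \<mu> Ph N (\<Sigma> N) Lo))" if "N \<ge> 1" for N
    using prior signal(1) util_bound types reg that by (intro regular_strong_BNE) auto
qed

lemma infinite_excess_below_of_liminf_less:
  assumes "liminf (\<lambda>N. ereal (scaled_excess N)) < ereal r"
  shows "infinite {N. scaled_excess N < r}"
  unfolding infinite_nat_iff_unbounded using liminf_upper_bound[OF assms] by auto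

lemma not_strong_BNE_if_excess_frequently_below:
  assumes "liminf (\<lambda>N. ereal (scaled_excess N)) < ereal r" "0 < \<eta>"
    and "\<And>N. N0 \<le> N \<Longrightarrow> scaled_excess N < r \<Longrightarrow> \<exists>w. \<eta> \<le> error_prob \<mu> Ph N (\<Sigma> N) w"
  shows "\<exists>\<epsilon>>0. infinite {N. N \<ge> 1 \<and> \<not> strong_BNE prior Ph \<mu> N (v N) (\<Sigma> N) \<epsilon>}"
proof (rule infinitely_many_not_strong_BNE[OF \<open>0 < \<eta>\<close>])
  have "{N. scaled_excess N < r} - {..<max 1 N0} \<subseteq> {N. 1 \<le> N \<and> (\<exists>w. \<eta> \<le> error_prob \<mu> Ph N (\<Sigma> N) w)}"
    using assms(3) by auto
  moreover have "infinite ({N. scaled_excess N < r} - {..<max 1 N0})"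
    using infinite_excess_below_of_liminf_less[OF assms(1)] by (simp add: Diff_infinite_finite)
  ultimately show "infinite {N. 1 \<le> N \<and> (\<exists>w. \<eta> \<le> error_prob \<mu> Ph N (\<Sigma> N) w)}"
    using infinite_super by blast
qed

theorem not_strong_BNE_if_liminf_negative:
  assumes "liminf (\<lambda>N. ereal (scaled_excess N)) < 0"
  shows "\<exists>\<epsilon>>0. infinite {N. N \<ge> 1 \<and> \<not> strong_BNE prior Ph \<mu> N (v N) (\<Sigma> N) \<epsilon>}"
proof -
  obtain r where r: "liminf (\<lambda>N. ereal (scaled_excess N)) < ereal r" "r < 0"
    using ereal_dense2[OF assms] by (auto simp: zero_ereal_def)
  show ?thesis
  proof (rule not_strong_BNE_if_excess_frequently_below[OF r(1), of "4 * r^2 / (1 + 4 * r^2)" 1])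
    show "0 < 4 * r^2 / (1 + 4 * r^2)" using r(2) by (simp add: add_pos_nonneg)
    fix N assume "1 \<le> N" "scaled_excess N < r"
    then show "\<exists>w. 4 * r^2 / (1 + 4 * r^2) \<le> error_prob \<mu> Ph N (\<Sigma> N) w"
      using error_prob_ge_of_negative_excess[OF _ valid_strategies signal(1), of N "- r"] r(2) by simp
  qed
qed

lemma vote_deviation_tail_ge:
  assumes "0 < \<psi>" and var: "\<forall>N\<ge>1. \<forall>w. var_votes Ph N (\<Sigma> N) w \<ge> \<psi> * real N" and "0 \<le> M"
  obtains \<eta> N0 where "0 < \<eta>" "1 \<le> N0"
    "\<And>N w s. N0 \<le> N \<Longrightarrow> \<bar>s\<bar> = 1 \<Longrightarrow> \<eta> \<le> bern_expect (vote_probs Ph w (\<Sigma> N)) {..<N}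
       (\<lambda>S. of_bool (M * sqrt (real N) \<le> s * (real (card S) - bern_mean (vote_probs Ph w (\<Sigma> N)) {..<N})))"
proof -
  obtain V0 \<eta> where "0 < \<eta>" and anti: "\<And>(p :: nat \<Rightarrow> real) I s. finite I \<Longrightarrow> p ` I \<subseteq> {0..1} \<Longrightarrow>
      V0 \<le> bern_var p I \<Longrightarrow> \<bar>s\<bar> = 1 \<Longrightarrow>
      \<eta> \<le> bern_expect p I (\<lambda>S. of_bool (M / sqrt \<psi> * sqrt (bern_var p I) \<le> s * (real (card S) - bern_mean p I)))"
    by (rule bern_anti_concentration[of "M / sqrt \<psi>"]) (rule that)
  show ?thesis
  proof (rule that[OF \<open>0 < \<eta>\<close>, of "max 1 (nat \<lceil>V0 / \<psi>\<rceil>)"])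
    fix N w and s :: real
    assume "max 1 (nat \<lceil>V0 / \<psi>\<rceil>) \<le> N" "\<bar>s\<bar> = 1"
    then have "1 \<le> N" "V0 / \<psi> \<le> real N" by linarith+
    then have "V0 \<le> \<psi> * real N" using \<open>0 < \<psi>\<close> by (simp add: field_simps)
    have probs: "vote_probs Ph w (\<Sigma> N) ` {..<N} \<subseteq> {0..1}"
      by (rule vote_probs_bounds[OF valid_strategies[OF \<open>1 \<le> N\<close>]]) (use signal(1) in auto)
    have var_N: "\<psi> * real N \<le> bern_var (vote_probs Ph w (\<Sigma> N)) {..<N}"
      using var \<open>1 \<le> N\<close> by (simp add: var_votes_eq)
    have "M * sqrt (real N) = M / sqrt \<psi> * sqrt (\<psi> * real N)"
      using \<open>0 < \<psi>\<close> by (simp add: real_sqrt_mult)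
    also have "\<dots> \<le> M / sqrt \<psi> * sqrt (bern_var (vote_probs Ph w (\<Sigma> N)) {..<N})"
      using var_N \<open>0 < \<psi>\<close> \<open>0 \<le> M\<close> by (intro mult_left_mono) auto
    finally have scale: "M * sqrt (real N) \<le> M / sqrt \<psi> * sqrt (bern_var (vote_probs Ph w (\<Sigma> N)) {..<N})" .
    have "\<eta> \<le> bern_expect (vote_probs Ph w (\<Sigma> N)) {..<N} (\<lambda>S. of_bool
        (M / sqrt \<psi> * sqrt (bern_var (vote_probs Ph w (\<Sigma> N)) {..<N})
          \<le> s * (real (card S) - bern_mean (vote_probs Ph w (\<Sigma> N)) {..<N})))"
      using \<open>V0 \<le> \<psi> * real N\<close> var_N \<open>\<bar>s\<bar> = 1\<close> by (intro anti[OF _ probs]) auto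
    also have "\<dots> \<le> bern_expect (vote_probs Ph w (\<Sigma> N)) {..<N}
        (\<lambda>S. of_bool (M * sqrt (real N) \<le> s * (real (card S) - bern_mean (vote_probs Ph w (\<Sigma> N)) {..<N})))"
      using scale by (intro bern_expect_indicator_mono[OF probs]) auto
    finally show "\<eta> \<le> \<dots>" .
  qed simp
qed

theorem not_strong_BNE_if_liminf_finite:
  assumes "liminf (\<lambda>N. ereal (scaled_excess N)) < \<infinity>"
    and "0 < \<psi>" and var: "\<forall>N\<ge>1. \<forall>w. var_votes Ph N (\<Sigma> N) w \<ge> \<psi> * real N"
  shows "\<exists>\<epsilon>>0. infinite {N. N \<ge> 1 \<and> \<not> strong_BNE prior Ph \<mu> N (v N) (\<Sigma> N) \<epsilon>}"
proof -
  obtain r where "liminf (\<lambda>N. ereal (scaled_excess N)) < ereal r"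
    using ereal_dense2[OF assms(1)] by auto
  then have r: "liminf (\<lambda>N. ereal (scaled_excess N)) < ereal (max r 1)"
    by (meson ereal_less_eq(3) max.cobounded1 order_less_le_trans)
  obtain \<eta> N0 where "0 < \<eta>" "1 \<le> N0" and tail: "\<And>N w s. N0 \<le> N \<Longrightarrow> \<bar>s\<bar> = 1 \<Longrightarrow>
      \<eta> \<le> bern_expect (vote_probs Ph w (\<Sigma> N)) {..<N} (\<lambda>S. of_bool
        (max r 1 * sqrt (real N) \<le> s * (real (card S) - bern_mean (vote_probs Ph w (\<Sigma> N)) {..<N})))"
    by (rule vote_deviation_tail_ge[OF assms(2,3), of "max r 1"]) (simp, rule that)
  show ?thesis
  proof (rule not_strong_BNE_if_excess_frequently_below[OF r \<open>0 < \<eta>\<close>])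
    fix N assume "N0 \<le> N" "scaled_excess N < max r 1"
    then show "\<exists>w. \<eta> \<le> error_prob \<mu> Ph N (\<Sigma> N) w"
      using \<open>1 \<le> N0\<close> tail
      by (intro error_prob_ge_of_deviation_tails[OF _ valid_strategies signal(1)]) auto
  qed
qed

end

theorem corollary1:
  fixes prior Ph :: "wstate \<Rightarrow> real" and \<mu> \<alpha>F \<alpha>U \<alpha>C :: real and B :: nat
    and v :: "nat \<Rightarrow> nat \<Rightarrow> wstate \<Rightarrow> outcome \<Rightarrow> nat"
    and \<Sigma> :: "nat \<Rightarrow> nat \<Rightarrow> strategy"
  assumes prior: "prior Lo > 0" "prior Hi > 0" "prior Lo + prior Hi = 1"
    and signal: "\<forall>w. 0 \<le> Ph w \<and> Ph w \<le> 1" "Ph Hi > Ph Lo"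
    and mu: "0 < \<mu>" "\<mu> < 1"
    and alpha: "\<alpha>F \<ge> 0" "\<alpha>U \<ge> 0" "\<alpha>C \<ge> 0" "\<alpha>F + \<alpha>U + \<alpha>C = 1"
      "\<alpha>F < \<mu>" "\<alpha>U < 1 - \<mu>"
    and util_bound: "\<forall>N n w x. v N n w x \<le> B"
    and util_mono: "\<forall>N n. n < N \<longrightarrow> v N n Hi Acc > v N n Lo Acc \<and> v N n Hi Rej < v N n Lo Rej"
    and types: "\<forall>N n. n < N \<longrightarrow> friendly (v N n) \<or> unfriendly (v N n) \<or> contingent (v N n)"
    and countF: "\<forall>N. card {n. n < N \<and> friendly (v N n)} = nat \<lfloor>\<alpha>F * real N\<rfloor>"
    and countU: "\<forall>N. card {n. n < N \<and> unfriendly (v N n)} = nat \<lfloor>\<alpha>U * real N\<rfloor>"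
    and reg: "\<forall>N\<ge>1. regular N (v N) (\<Sigma> N)"
  shows
    "(liminf (\<lambda>N. ereal (sqrt (real N) * excess Ph \<mu> N (\<Sigma> N))) = \<infinity> \<longrightarrow>
        (\<exists>\<epsilon> :: nat \<Rightarrow> real. \<epsilon> \<longlonglongrightarrow> 0 \<and>
           (\<forall>N\<ge>1. strong_BNE prior Ph \<mu> N (v N) (\<Sigma> N) (\<epsilon> N))))
     \<and> (liminf (\<lambda>N. ereal (sqrt (real N) * excess Ph \<mu> N (\<Sigma> N))) < 0 \<longrightarrow>
        (\<exists>\<epsilon>>0. infinite {N. N \<ge> 1 \<and> \<not> strong_BNE prior Ph \<mu> N (v N) (\<Sigma> N) \<epsilon>}))
     \<and> (0 \<le> liminf (\<lambda>N. ereal (sqrt (real N) * excess Ph \<mu> N (\<Sigma> N))) \<and>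
        liminf (\<lambda>N. ereal (sqrt (real N) * excess Ph \<mu> N (\<Sigma> N))) < \<infinity> \<and>
        (\<exists>\<psi>>0. \<forall>N\<ge>1. \<forall>w. var_votes Ph N (\<Sigma> N) w \<ge> \<psi> * real N) \<longrightarrow>
        (\<exists>\<epsilon>>0. infinite {N. N \<ge> 1 \<and> \<not> strong_BNE prior Ph \<mu> N (v N) (\<Sigma> N) \<epsilon>}))"
proof -
  interpret voting_sequence prior Ph \<mu> \<alpha>F \<alpha>U \<alpha>C B v \<Sigma>
    by unfold_locales (fact assms)+
  show ?thesis
    using strong_BNE_if_liminf_infinite not_strong_BNE_if_liminf_negative
      not_strong_BNE_if_liminf_finite
    by blast
qed

end
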